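(* Let $\mathcal{T}$ be a class of trees. If $\mathcal{T}$ is not matching splittable, then $\mathcal{T}$ has unbounded fork number, or unbounded star number, or unbounded $\mathrm{C}$-number.
   Context: Let $T$ be a tree. A $2$-path of length $a$ is a path $x_0,\dots,x_a$ with $\deg(x_0)\ne 2$, $\deg(x_1)=\dots=\deg(x_{a-1})=2$, $\deg(x_a)\ne2$. A source is a vertex of degree $>2$. A ray of length $a$ is a $2$-path $x_0,\dots,x_a$ with $\deg(x_0)>2$ and $\deg(x_a)=1$; $x_0$ is its source. For a source $s$, $\deg_{\mathcal{L}}^a(s)$ is the number of rays of length $a$ with source $s$, $\deg_{\mathcal{L}}(s)=\sum_a\deg_{\mathcal{L}}^a(s)$, and $\deg_{\overline{\mathcal{L}}}(s)=\deg(s)-\deg_{\mathcal{L}}(s)$. Forks: for positive integers $a,b$, a source $s$ is an $a$-$b$-fork if $\deg_{\overline{\mathcal{L}}}(s)=1$ and either $a\ne b$ and $\deg_{\mathcal{L}}^a(s),\deg_{\mathcal{L}}^b(s)>0$, or $a=b$ and $\deg_{\mathcal{L}}^a(s)>1$. $\mathrm{F}_{a,b}(T)$ is the maximum size of an independent set consisting of $a$-$b$-forks. A class $\mathcal{T}$ has unbounded fork number if for every $B$ there are $a,b$ and $T\in\mathcal{T}$ with $\mathrm{F}_{a,b}(T)\ge B$. Stars: for $c\ge3$, a $c$-star of size $k$ is a collection of $k$ distinct rays of length $c$ with a common source; $\mathrm{S}_c(T)$ is the maximum size of a $c$-star in $T$. $\mathcal{T}$ has unbounded star number if for every $B$ there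 exist $c\ge3$ and $T\in\mathcal{T}$ with $\mathrm{S}_c(T)\ge B$. C-gadgets: a $\mathrm{C}$-gadget of order $d$ and length $k$ is a path $x_0,\dots,x_k$ in $T$ such that each inner vertex $x_i$ ($1\le i\le k-1$) either has $\deg(x_i)=2$, or is a source such that every neighbour $v\in N(x_i)\setminus\{x_{i-1},x_{i+1}\}$ is contained in a ray of length at most $d$ from $x_i$ to a leaf. $\mathrm{C}_d(T)$ is the length of the longest $\mathrm{C}$-gadget of order $d$ in $T$. $\mathcal{T}$ has unbounded $\mathrm{C}$-number if there exists $d>0$ such that for every $B$ there is $T\in\mathcal{T}$ with $\mathrm{C}_d(T)\ge B$. The matching-split number of a graph $H$ is the minimum size of $S\subseteq V(H)$ such that every vertex of $H[V(H)\setminus S]$ has degree at most $1$; $\mathcal{T}$ is matching splittable if this number is bounded over $\mathcal{T}$. *)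

theory Defs
  imports Main
begin

type_synonym 'a graph = "'a set \<times> 'a set set"

definition verts :: "'a graph \<Rightarrow> 'a set" where "verts G = fst G"
definition edges :: "'a graph \<Rightarrow> 'a set set" where "edges G = snd G"

definition is_graph :: "'a graph \<Rightarrow> bool" where
  "is_graph G \<longleftrightarrow> finite (verts G) \<and>
     (\<forall>e\<in>edges G. \<exists>u v. u \<noteq> v \<and> e = {u, v} \<and> u \<in> verts G \<and> v \<in> verts G)"

definition deg :: "'a graph \<Rightarrow> 'a \<Rightarrow> nat" where
  "deg G v = card {u. {u, v} \<in> edges G}"

text \<open>A path x_0,...,x_k (as the list [x_0,...,x_k]): distinct vertices, consecutive ones adjacent.
  Its length is k = length xs - 1.\<close>
definition is_path :: "'a graph \<Rightarrow> 'a list \<Rightarrow> bool" where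
  "is_path G xs \<longleftrightarrow> xs \<noteq> [] \<and> distinct xs \<and> set xs \<subseteq> verts G \<and>
     (\<forall>i. Suc i < length xs \<longrightarrow> {xs ! i, xs ! Suc i} \<in> edges G)"

definition is_cycle :: "'a graph \<Rightarrow> 'a list \<Rightarrow> bool" where
  "is_cycle G xs \<longleftrightarrow> is_path G xs \<and> length xs \<ge> 3 \<and> {last xs, hd xs} \<in> edges G"

definition connected_graph :: "'a graph \<Rightarrow> bool" where
  "connected_graph G \<longleftrightarrow> (\<forall>u\<in>verts G. \<forall>v\<in>verts G.
      \<exists>xs. is_path G xs \<and> hd xs = u \<and> last xs = v)"

definition is_tree :: "'a graph \<Rightarrow> bool" where
  "is_tree G \<longleftrightarrow> is_graph G \<and> verts G \<noteq> {} \<and> connected_graph G \<and> (\<nexists>xs. is_cycle G xs)"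

definition independent :: "'a graph \<Rightarrow> 'a set \<Rightarrow> bool" where
  "independent G I \<longleftrightarrow> I \<subseteq> verts G \<and> (\<forall>u\<in>I. \<forall>v\<in>I. {u, v} \<notin> edges G)"

definition two_path :: "'a graph \<Rightarrow> nat \<Rightarrow> 'a list \<Rightarrow> bool" where
  "two_path G a xs \<longleftrightarrow> is_path G xs \<and> length xs = Suc a \<and> a \<ge> 1 \<and>
     deg G (xs ! 0) \<noteq> 2 \<and> (\<forall>i. 1 \<le> i \<and> i < a \<longrightarrow> deg G (xs ! i) = 2) \<and> deg G (xs ! a) \<noteq> 2"

definition is_source :: "'a graph \<Rightarrow> 'a \<Rightarrow> bool" where
  "is_source G s \<longleftrightarrow> s \<in> verts G \<and> deg G s > 2"

definition ray :: "'a graph \<Rightarrow> nat \<Rightarrow> 'a \<Rightarrow> 'a list \<Rightarrow> bool" where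
  "ray G a s xs \<longleftrightarrow> two_path G a xs \<and> xs ! 0 = s \<and> deg G s > 2 \<and> deg G (xs ! a) = 1"

definition degL_len :: "'a graph \<Rightarrow> nat \<Rightarrow> 'a \<Rightarrow> nat" where
  "degL_len G a s = card {xs. ray G a s xs}"

definition degL :: "'a graph \<Rightarrow> 'a \<Rightarrow> nat" where
  "degL G s = card {xs. \<exists>a. ray G a s xs}"

definition degLbar :: "'a graph \<Rightarrow> 'a \<Rightarrow> nat" where
  "degLbar G s = deg G s - degL G s"

definition is_fork :: "'a graph \<Rightarrow> nat \<Rightarrow> nat \<Rightarrow> 'a \<Rightarrow> bool" where
  "is_fork G a b s \<longleftrightarrow> is_source G s \<and> degLbar G s = 1 \<and>
     ((a \<noteq> b \<and> degL_len G a s > 0 \<and> degL_len G b s > 0) \<or> (a = b \<and> degL_len G a s > 1))"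

definition fork_number :: "'a graph \<Rightarrow> nat \<Rightarrow> nat \<Rightarrow> nat" where
  "fork_number G a b = Max {card I | I. independent G I \<and> (\<forall>s\<in>I. is_fork G a b s)}"

definition unbounded_fork_number :: "'a graph set \<Rightarrow> bool" where
  "unbounded_fork_number \<T> \<longleftrightarrow>
     (\<forall>B::nat. \<exists>a b T. a > 0 \<and> b > 0 \<and> T \<in> \<T> \<and> fork_number T a b \<ge> B)"

definition is_star :: "'a graph \<Rightarrow> nat \<Rightarrow> 'a list set \<Rightarrow> bool" where
  "is_star G c R \<longleftrightarrow> (\<exists>s. \<forall>xs\<in>R. ray G c s xs)"

definition star_number :: "'a graph \<Rightarrow> nat \<Rightarrow> nat" where
  "star_number G c = Max {card R | R. finite R \<and> is_star G c R}"

definition unbounded_star_number :: "'a graph set \<Rightarrow> bool" where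
  "unbounded_star_number \<T> \<longleftrightarrow>
     (\<forall>B::nat. \<exists>c T. c \<ge> 3 \<and> T \<in> \<T> \<and> star_number T c \<ge> B)"

definition C_gadget :: "'a graph \<Rightarrow> nat \<Rightarrow> nat \<Rightarrow> 'a list \<Rightarrow> bool" where
  "C_gadget G d k xs \<longleftrightarrow> is_path G xs \<and> length xs = Suc k \<and>
     (\<forall>i. 1 \<le> i \<and> i < k \<longrightarrow>
        deg G (xs ! i) = 2 \<or>
        (is_source G (xs ! i) \<and>
         (\<forall>v. {v, xs ! i} \<in> edges G \<and> v \<noteq> xs ! (i - 1) \<and> v \<noteq> xs ! Suc i \<longrightarrow>
            (\<exists>a r. a \<le> d \<and> ray G a (xs ! i) r \<and> v \<in> set r))))"

definition C_number :: "'a graph \<Rightarrow> nat \<Rightarrow> nat" where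
  "C_number G d = Max {k. \<exists>xs. C_gadget G d k xs}"

definition unbounded_C_number :: "'a graph set \<Rightarrow> bool" where
  "unbounded_C_number \<T> \<longleftrightarrow>
     (\<exists>d>0. \<forall>B::nat. \<exists>T\<in>\<T>. C_number T d \<ge> B)"

definition matching_split_number :: "'a graph \<Rightarrow> nat" where
  "matching_split_number G = Min {card S | S. S \<subseteq> verts G \<and>
      (\<forall>v\<in>verts G - S. card {u \<in> verts G - S. {u, v} \<in> edges G} \<le> 1)}"

definition matching_splittable :: "'a graph set \<Rightarrow> bool" where
  "matching_splittable \<T> \<longleftrightarrow> (\<exists>B::nat. \<forall>T\<in>\<T>. matching_split_number T \<le> B)"

end

(* Call the core of a tree what remains when every ray is deleted except for its source, and assume
   that the fork, star and C-numbers are bounded. A ray is a C-gadget of order 1, so all rays are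
   short; and if a leaf lies in the core, the whole tree is a path, hence small. Otherwise every
   leaf ends a ray, and the degree sum of the tree shows that the core vertices of core degree
   other than 2, all of them sources, are at most three times as many as the sources of core
   degree 0 (there is at most one) plus those of core degree 1. The latter are forks, and as each
   has a single core neighbour, half of those of one fork type are independent; so the fork
   number bounds them. Every other core vertex ends a chain of core vertices of core degree 2
   starting at one of these sources; the chain is a C-gadget of bounded order, hence short, and it
   is determined by its first edge and its length. So the core is small. Removing the core and all
   rays of length at least 3, of which each source has boundedly many by the star number, leaves
   a graph of maximum degree 1. *)

theory Submission
  imports Defs
begin

lemma card_eq_1_imp_eq: "card A = 1 \<Longrightarrow> x \<in> A \<Longrightarrow> y \<in> A \<Longrightarrow> x = y"
  by (auto simp: card_1_singleton_iff)

lemma card_eq_2_cases: "card A = 2 \<Longrightarrow> x \<in> A \<Longrightarrow> y \<in> A \<Longrightarrow> x \<noteq> y \<Longrightarrow> z \<in> A \<Longrightarrow> z = x \<or> z = y"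
  by (auto simp: card_2_iff)

lemma card_UN_le_mult:
  assumes "finite I" "\<And>i. i \<in> I \<Longrightarrow> card (A i) \<le> k"
  shows "card (\<Union>i\<in>I. A i) \<le> card I * k"
proof -
  have "card (\<Union>i\<in>I. A i) \<le> (\<Sum>i\<in>I. card (A i))" by (rule card_UN_le[OF assms(1)])
  also have "\<dots> \<le> card I * k" using sum_bounded_above[of I "\<lambda>i. card (A i)" k] assms(2) by simp
  finally show ?thesis .
qed

lemma card_le_mult_if_fibres_le:
  assumes "finite P" "f ` A \<subseteq> P" "\<And>p. p \<in> P \<Longrightarrow> card {x \<in> A. f x = p} \<le> k"
  shows "card A \<le> card P * k"
proof -
  have "(\<Union>p\<in>P. {x \<in> A. f x = p}) = A" using assms(2) by auto
  then show ?thesis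
    using card_UN_le_mult[OF assms(1), of "\<lambda>p. {x \<in> A. f x = p}"] assms(3) by simp
qed

lemma independent_subset_half:
  fixes adj :: "'a \<Rightarrow> 'a \<Rightarrow> bool"
  assumes "finite Q"
    and unique: "\<And>s t t'. s \<in> Q \<Longrightarrow> t \<in> Q \<Longrightarrow> t' \<in> Q \<Longrightarrow> adj s t \<Longrightarrow> adj s t' \<Longrightarrow> t = t'"
    and sym: "\<And>s t. adj s t \<Longrightarrow> adj t s"
  shows "\<exists>I\<subseteq>Q. (\<forall>u\<in>I. \<forall>v\<in>I. u \<noteq> v \<longrightarrow> \<not> adj u v) \<and> card Q \<le> 2 * card I"
  using assms(1) unique
proof (induction Q rule: finite_psubset_induct)
  case (psubset Q)
  show ?case
  proof (cases "Q = {}")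
    case False
    then obtain s where s: "s \<in> Q" by blast
    define N where "N = {t \<in> Q. adj s t}"
    define Q' where "Q' = Q - {s} - N"
    have fin: "finite (Q' \<union> N)"
      using psubset.hyps(1) unfolding Q'_def N_def by auto
    have "card Q \<le> card (insert s (Q' \<union> N))"
      using fin by (intro card_mono) (auto simp: Q'_def)
    also have "\<dots> \<le> Suc (card Q' + card N)"
      using fin card_Un_le[of Q' N] by (simp add: card_insert_if)
    also have "card N \<le> 1"
    proof -
      have "\<forall>t\<in>N. \<forall>t'\<in>N. t = t'" using psubset.prems[of s] s unfolding N_def by blast
      then show ?thesis using fin card_le_Suc0_iff_eq[of N] by simp
    qed
    finally have card_Q: "card Q \<le> card Q' + 2" by simp
    have "Q' \<subset> Q" using s unfolding Q'_def by auto
    have "\<exists>I\<subseteq>Q'. (\<forall>u\<in>I. \<forall>v\<in>I. u \<noteq> v \<longrightarrow> \<not> adj u v) \<and> card Q' \<le> 2 * card I"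
    proof (rule psubset.IH[OF \<open>Q' \<subset> Q\<close>])
      fix x t t' assume "x \<in> Q'" "t \<in> Q'" "t' \<in> Q'" "adj x t" "adj x t'"
      then show "t = t'" using psubset.prems[of x t t'] unfolding Q'_def by simp
    qed
    then obtain I' where I': "I' \<subseteq> Q'" "\<forall>u\<in>I'. \<forall>v\<in>I'. u \<noteq> v \<longrightarrow> \<not> adj u v" "card Q' \<le> 2 * card I'"
      by blast
    have "s \<notin> I'" "\<forall>v\<in>I'. \<not> adj s v"
      using I'(1) unfolding Q'_def N_def by auto
    moreover from this(2) have "\<forall>v\<in>I'. \<not> adj v s" using sym by blast
    moreover have "finite I'" using finite_subset[OF I'(1)] fin by simp
    ultimately show ?thesis
      using I' s card_Q unfolding Q'_def by (intro exI[of _ "insert s I'"]) auto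
  qed simp
qed

section \<open>Graphs and paths\<close>

definition nbrs :: "'a graph \<Rightarrow> 'a \<Rightarrow> 'a set" where
  "nbrs G v = {u. {u, v} \<in> edges G}"

lemma deg_eq_card_nbrs: "deg G v = card (nbrs G v)"
  by (simp add: deg_def nbrs_def)

lemma nbrs_commute: "u \<in> nbrs G v \<longleftrightarrow> v \<in> nbrs G u"
  by (simp add: nbrs_def insert_commute)

lemma graph_edgeE:
  assumes "is_graph G" "e \<in> edges G"
  obtains u v where "e = {u, v}" "u \<noteq> v" "u \<in> verts G" "v \<in> verts G"
  using assms unfolding is_graph_def by blast

lemma edge_endpoints:
  assumes "is_graph G" "{u, v} \<in> edges G"
  shows "u \<in> verts G" "v \<in> verts G" "u \<noteq> v"
  using assms by (auto elim!: graph_edgeE simp: doubleton_eq_iff)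

lemma finite_verts: "is_graph G \<Longrightarrow> finite (verts G)"
  by (simp add: is_graph_def)

lemma nbrs_subset_verts: "is_graph G \<Longrightarrow> nbrs G v \<subseteq> verts G"
  by (auto simp: nbrs_def dest: edge_endpoints)

lemma finite_nbrs: "is_graph G \<Longrightarrow> finite (nbrs G v)"
  using nbrs_subset_verts finite_verts by (rule finite_subset)

lemma nbrs_irrefl: "is_graph G \<Longrightarrow> u \<in> nbrs G v \<Longrightarrow> u \<noteq> v"
  by (auto simp: nbrs_def dest: edge_endpoints)

lemma nbrs_subset_if_deg_le:
  assumes g: "is_graph G" and "deg G v \<le> card (X \<inter> nbrs G v)"
  shows "nbrs G v \<subseteq> X"
proof -
  have "X \<inter> nbrs G v = nbrs G v"
    using assms card_seteq[OF finite_nbrs[OF g], of "X \<inter> nbrs G v"] by (simp add: deg_eq_card_nbrs)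
  then show ?thesis by blast
qed

lemma path_edge: "is_path G xs \<Longrightarrow> Suc i < length xs \<Longrightarrow> {xs ! i, xs ! Suc i} \<in> edges G"
  by (simp add: is_path_def)

lemma path_nbr_prev: "is_path G xs \<Longrightarrow> Suc i < length xs \<Longrightarrow> xs ! i \<in> nbrs G (xs ! Suc i)"
  by (simp add: is_path_def nbrs_def)

lemma path_nbr_next: "is_path G xs \<Longrightarrow> Suc i < length xs \<Longrightarrow> xs ! Suc i \<in> nbrs G (xs ! i)"
  by (simp add: is_path_def nbrs_def insert_commute)

lemma path_nth_neq: "is_path G xs \<Longrightarrow> i < length xs \<Longrightarrow> j < length xs \<Longrightarrow> i \<noteq> j \<Longrightarrow> xs ! i \<noteq> xs ! j"
  by (simp add: is_path_def nth_eq_iff_index_eq)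

lemma path_last_nbr:
  assumes "is_path G xs" "2 \<le> length xs"
  shows "xs ! (length xs - 2) \<in> nbrs G (last xs)"
proof -
  have "Suc (length xs - 2) = length xs - 1" using assms(2) by arith
  then show ?thesis
    using path_nbr_prev[OF assms(1), of "length xs - 2"] assms(2) last_conv_nth[of xs] by fastforce
qed

lemma card_set_path: "is_path G xs \<Longrightarrow> card (set xs) = length xs"
  by (simp add: is_path_def distinct_card)

lemma length_path_le_card_verts: "is_graph G \<Longrightarrow> is_path G xs \<Longrightarrow> length xs \<le> card (verts G)"
  by (metis card_mono card_set_path finite_verts is_path_def)

lemma finite_paths: "is_graph G \<Longrightarrow> finite {xs. is_path G xs}"
  by (rule finite_subset[OF _ finite_subset_distinct[OF finite_verts]]) (auto simp: is_path_def)

lemma is_path_rev: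
  assumes "is_path G xs"
  shows "is_path G (rev xs)"
proof -
  have "{rev xs ! i, rev xs ! Suc i} \<in> edges G" if "Suc i < length xs" for i
    using path_edge[OF assms, of "length xs - Suc (Suc i)"] that
    by (simp add: rev_nth Suc_diff_Suc insert_commute)
  then show ?thesis
    using assms by (simp add: is_path_def)
qed

lemma is_path_drop: "is_path G xs \<Longrightarrow> j < length xs \<Longrightarrow> is_path G (drop j xs)"
  unfolding is_path_def by (auto dest: in_set_dropD)

lemma is_path_snoc:
  assumes "is_path G xs" "y \<notin> set xs" "{last xs, y} \<in> edges G" "y \<in> verts G"
  shows "is_path G (xs @ [y])"
proof -
  have "{(xs @ [y]) ! i, (xs @ [y]) ! Suc i} \<in> edges G" if "Suc i < Suc (length xs)" for i
  proof (cases "Suc i = length xs")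
    case True
    then have "xs ! i = last xs"
      by (metis diff_Suc_1 last_conv_nth list.size(3) nat.distinct(1))
    then show ?thesis
      using assms(3) True by (simp add: nth_append)
  next
    case False
    then show ?thesis
      using that path_edge[OF assms(1), of i] by (simp add: nth_append)
  qed
  then show ?thesis
    using assms unfolding is_path_def by simp
qed

lemma deg_path_inner_ge_2:
  assumes "is_graph G" "is_path G xs" "0 < i" "Suc i < length xs"
  shows "2 \<le> deg G (xs ! i)"
proof -
  have "{xs ! (i - 1), xs ! Suc i} \<subseteq> nbrs G (xs ! i)"
    using path_nbr_prev[OF assms(2), of "i - 1"] path_nbr_next[OF assms(2), of i] assms(3,4) by simp
  moreover have "xs ! (i - 1) \<noteq> xs ! Suc i"
    using path_nth_neq[OF assms(2)] assms(4) by simp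
  ultimately show ?thesis
    unfolding deg_eq_card_nbrs
    by (metis card_2_iff card_mono finite_nbrs[OF assms(1)])
qed

lemma walk_determined_by_first_edge:
  assumes dx: "distinct xs" and dy: "distinct ys"
    and start: "xs ! 0 = ys ! 0" "xs ! 1 = ys ! 1"
    and wx: "\<And>i. Suc i < length xs \<Longrightarrow> xs ! i \<in> N (xs ! Suc i) \<and> xs ! Suc i \<in> N (xs ! i)"
    and wy: "\<And>i. Suc i < length ys \<Longrightarrow> ys ! Suc i \<in> N (ys ! i)"
    and inner: "\<And>i. 1 \<le> i \<Longrightarrow> Suc i < length xs \<Longrightarrow> card (N (xs ! i)) = 2"
  shows "i < length xs \<Longrightarrow> i < length ys \<Longrightarrow> xs ! i = ys ! i"
proof (induction i rule: less_induct)
  case (less i)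
  show ?case
  proof (cases "i \<le> 1")
    case True
    then show ?thesis using start by (cases i) auto
  next
    case False
    then obtain k where k: "i = Suc (Suc k)"
      by (cases i; cases "i - 1") auto
    have IH: "xs ! k = ys ! k" "xs ! Suc k = ys ! Suc k"
      using less k by auto
    have c: "card (N (xs ! Suc k)) = 2"
      using inner[of "Suc k"] less.prems k by simp
    have p: "xs ! k \<in> N (xs ! Suc k)" and x: "xs ! i \<in> N (xs ! Suc k)"
      using wx[of k] wx[of "Suc k"] less.prems k by auto
    have y: "ys ! i \<in> N (xs ! Suc k)"
      using wy[of "Suc k"] less.prems k IH by simp
    have "xs ! k \<noteq> xs ! i" "ys ! i \<noteq> ys ! k"
      using dx dy less.prems k by (simp_all add: nth_eq_iff_index_eq)
    then show ?thesis
      using card_eq_2_cases[OF c p x _ y] IH by auto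
  qed
qed

lemma tree_is_graph: "is_tree G \<Longrightarrow> is_graph G"
  by (simp add: is_tree_def)

lemma tree_path_last_nbr_eq_pred:
  assumes t: "is_tree G" and p: "is_path G xs" and lx: "2 \<le> length xs"
    and y: "y \<in> nbrs G (last xs)" "y \<in> set xs"
  shows "y = xs ! (length xs - 2)"
proof (rule ccontr)
  assume yne: "y \<noteq> xs ! (length xs - 2)"
  obtain j where j: "j < length xs" "xs ! j = y" using y(2) by (auto simp: in_set_conv_nth)
  have "Suc (length xs - 2) = length xs - 1" using lx by arith
  moreover have "last xs = xs ! (length xs - 1)" using lx last_conv_nth[of xs] by fastforce
  ultimately have "j \<noteq> Suc (length xs - 2)" using nbrs_irrefl[OF tree_is_graph[OF t] y(1)] j by auto
  moreover have "j \<noteq> length xs - 2" using j yne by auto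
  ultimately have "j + 3 \<le> length xs" using j lx by linarith
  then have "is_cycle G (drop j xs)"
    unfolding is_cycle_def using is_path_drop[OF p j(1)] j y(1)
    by (simp add: hd_drop_conv_nth nbrs_def insert_commute)
  then show False using t unfolding is_tree_def by blast
qed

lemma maximal_path:
  assumes t: "is_tree G" and W: "W \<subseteq> verts G"
    and e0: "{x0, x1} \<in> edges G" and w0: "x0 \<in> W" "x1 \<in> W"
  obtains xs where "is_path G xs" "set xs \<subseteq> W" "2 \<le> length xs" "xs ! 0 = x0" "xs ! 1 = x1"
    "\<forall>i. 1 \<le> i \<and> Suc i < length xs \<longrightarrow> P (xs ! i)"
    "P (last xs) \<Longrightarrow> nbrs G (last xs) \<inter> W \<subseteq> {xs ! (length xs - 2)}"
proof -
  have g: "is_graph G" using t by (rule tree_is_graph)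
  define M where "M xs \<longleftrightarrow> is_path G xs \<and> set xs \<subseteq> W \<and> 2 \<le> length xs \<and> xs ! 0 = x0 \<and> xs ! 1 = x1 \<and>
     (\<forall>i. 1 \<le> i \<and> Suc i < length xs \<longrightarrow> P (xs ! i))" for xs
  have "is_path G [x0, x1]"
    unfolding is_path_def using edge_endpoints[OF g e0] e0 by (auto simp: less_Suc_eq)
  then have "M [x0, x1]" unfolding M_def using w0 by auto
  moreover have "\<forall>ys. M ys \<longrightarrow> length ys < Suc (card (verts G))"
    using length_path_le_card_verts[OF g] unfolding M_def by (simp add: less_Suc_eq_le)
  ultimately obtain xs where mx: "M xs" and longest: "\<forall>ys. M ys \<longrightarrow> length ys \<le> length xs"
    using ex_has_greatest_nat[of M _ length] by metis
  have px: "is_path G xs" and lx: "2 \<le> length xs" using mx unfolding M_def by auto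
  have "y \<in> set xs" if Pl: "P (last xs)" and yW: "y \<in> W" and y: "y \<in> nbrs G (last xs)" for y
  proof (rule ccontr)
    assume new: "y \<notin> set xs"
    have ne: "xs \<noteq> []" using lx by auto
    have "P ((xs @ [y]) ! i)" if "1 \<le> i" "Suc i < length (xs @ [y])" for i
    proof (cases "Suc i = length xs")
      case True
      then have "i = length xs - 1" by simp
      then show ?thesis using Pl ne by (simp add: nth_append last_conv_nth)
    next
      case False
      then show ?thesis using mx that unfolding M_def by (simp add: nth_append)
    qed
    then have "M (xs @ [y])"
      using mx yW y W is_path_snoc[OF px new] lx
      unfolding M_def by (auto simp: nth_append nbrs_def insert_commute)
    then show False using longest by fastforce
  qed
  then have "P (last xs) \<Longrightarrow> nbrs G (last xs) \<inter> W \<subseteq> {xs ! (length xs - 2)}"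
    using tree_path_last_nbr_eq_pred[OF t px lx] by blast
  with mx show ?thesis
    unfolding M_def by (intro that[of xs]) auto
qed

lemma tree_closed_subset:
  assumes t: "is_tree G" and x0: "x0 \<in> X" "x0 \<in> verts G"
    and closed: "\<And>x u. x \<in> X \<Longrightarrow> u \<in> nbrs G x \<Longrightarrow> u \<in> X"
  shows "verts G \<subseteq> X"
proof
  fix v assume v: "v \<in> verts G"
  obtain xs where p: "is_path G xs" and h: "hd xs = x0" and l: "last xs = v"
    using t x0 v unfolding is_tree_def connected_graph_def by blast
  have ne: "xs \<noteq> []" using p by (simp add: is_path_def)
  have "i < length xs \<Longrightarrow> xs ! i \<in> X" for i
  proof (induction i)
    case 0
    then show ?case using h ne x0 by (simp add: hd_conv_nth)
  next
    case (Suc i)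
    then show ?case using closed path_nbr_next[OF p Suc.prems] by simp
  qed
  then have "xs ! (length xs - 1) \<in> X" using ne by simp
  then show "v \<in> X" using l ne by (simp add: last_conv_nth)
qed

lemma tree_deg_pos:
  assumes t: "is_tree G" and c: "2 \<le> card (verts G)" and v: "v \<in> verts G"
  shows "0 < deg G v"
proof (rule ccontr)
  assume "\<not> 0 < deg G v"
  then have "nbrs G v = {}"
    using finite_nbrs[OF tree_is_graph[OF t]] by (simp add: deg_eq_card_nbrs)
  then have "verts G \<subseteq> {v}"
    using tree_closed_subset[OF t _ v, of "{v}"] by auto
  then have "card (verts G) \<le> 1"
    using card_mono[of "{v}"] by fastforce
  then show False using c by simp
qed

lemma tree_has_leaf:
  assumes t: "is_tree G" and c: "2 \<le> card (verts G)"
  obtains l where "l \<in> verts G" "deg G l = 1"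
proof -
  have g: "is_graph G" using t by (rule tree_is_graph)
  obtain u where u: "u \<in> verts G" using c by fastforce
  then obtain w where w: "w \<in> nbrs G u"
    using tree_deg_pos[OF t c] by (fastforce simp: deg_eq_card_nbrs card_gt_0_iff)
  then have e: "{u, w} \<in> edges G" by (simp add: nbrs_def insert_commute)
  obtain xs where p: "is_path G xs" and lx: "2 \<le> length xs"
    and stop: "nbrs G (last xs) \<inter> verts G \<subseteq> {xs ! (length xs - 2)}"
    using maximal_path[OF t order_refl e edge_endpoints(1,2)[OF g e], of "\<lambda>_. True"] by blast
  have "nbrs G (last xs) = {xs ! (length xs - 2)}"
    using path_last_nbr[OF p lx] stop nbrs_subset_verts[OF g] by blast
  moreover have "last xs \<in> verts G" using p lx unfolding is_path_def by auto
  ultimately show ?thesis using that by (simp add: deg_eq_card_nbrs)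
qed

definition del_vert :: "'a graph \<Rightarrow> 'a \<Rightarrow> 'a graph" where
  "del_vert G l = (verts G - {l}, {e \<in> edges G. l \<notin> e})"

lemma verts_del_vert[simp]: "verts (del_vert G l) = verts G - {l}"
  by (simp add: del_vert_def verts_def)

lemma edges_del_vert[simp]: "edges (del_vert G l) = {e \<in> edges G. l \<notin> e}"
  by (simp add: del_vert_def edges_def)

lemma is_path_del_vert: "is_path (del_vert G l) xs \<longleftrightarrow> is_path G xs \<and> l \<notin> set xs"
proof -
  have "l \<notin> {xs ! i, xs ! Suc i}" if "l \<notin> set xs" "Suc i < length xs" for i
    using that nth_mem[of i xs] nth_mem[of "Suc i" xs] by auto
  then show ?thesis
    unfolding is_path_def by auto
qed

lemma leaf_notin_path:
  assumes g: "is_graph G" and p: "is_path G xs" and l: "deg G l = 1" "hd xs \<noteq> l" "last xs \<noteq> l"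
  shows "l \<notin> set xs"
proof
  assume "l \<in> set xs"
  then obtain i where i: "i < length xs" "xs ! i = l" by (auto simp: in_set_conv_nth)
  have ne: "xs \<noteq> []" using p by (simp add: is_path_def)
  have "i \<noteq> 0"
  proof
    assume "i = 0"
    then show False using l(2) i hd_conv_nth[OF ne] by simp
  qed
  moreover have "i \<noteq> length xs - 1" using l(3) i ne by (auto simp: last_conv_nth)
  ultimately have "2 \<le> deg G l"
    using deg_path_inner_ge_2[OF g p, of i] i by simp
  then show False using l(1) by simp
qed

lemma is_tree_del_leaf:
  assumes t: "is_tree G" and l: "l \<in> verts G" "deg G l = 1" and c: "2 \<le> card (verts G)"
  shows "is_tree (del_vert G l)"
proof -
  have g: "is_graph G" using t by (rule tree_is_graph)
  have "is_graph (del_vert G l)"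
    unfolding is_graph_def
  proof (intro conjI ballI)
    show "finite (verts (del_vert G l))" using finite_verts[OF g] by simp
  next
    fix e assume "e \<in> edges (del_vert G l)"
    then have e: "e \<in> edges G" "l \<notin> e" by auto
    then obtain u v where "e = {u, v}" "u \<noteq> v" "u \<in> verts G" "v \<in> verts G"
      using graph_edgeE[OF g e(1)] by blast
    with e(2) show "\<exists>u v. u \<noteq> v \<and> e = {u, v} \<and> u \<in> verts (del_vert G l) \<and> v \<in> verts (del_vert G l)"
      by auto
  qed
  moreover have "card (verts (del_vert G l)) \<noteq> 0"
    using c l(1) finite_verts[OF g] by simp
  then have "verts (del_vert G l) \<noteq> {}" by (metis card.empty)
  moreover have "connected_graph (del_vert G l)"
    unfolding connected_graph_def
  proof (intro ballI)
    fix u v assume u: "u \<in> verts (del_vert G l)" and v: "v \<in> verts (del_vert G l)"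
    then have "u \<in> verts G" "v \<in> verts G" by auto
    then obtain xs where xs: "is_path G xs" "hd xs = u" "last xs = v"
      using t unfolding is_tree_def connected_graph_def by blast
    then have "l \<notin> set xs"
      using leaf_notin_path[OF g xs(1) l(2)] u v by simp
    with xs show "\<exists>xs. is_path (del_vert G l) xs \<and> hd xs = u \<and> last xs = v"
      by (auto simp: is_path_del_vert)
  qed
  moreover have "\<nexists>xs. is_cycle (del_vert G l) xs"
    using t unfolding is_tree_def is_cycle_def is_path_del_vert by auto
  ultimately show ?thesis unfolding is_tree_def by blast
qed

lemma card_incident_edges:
  assumes g: "is_graph G"
  shows "card {e \<in> edges G. v \<in> e} = deg G v"
proof -
  have "inj_on (\<lambda>u. {u, v}) (nbrs G v)"
    using nbrs_irrefl[OF g] by (auto simp: inj_on_def doubleton_eq_iff)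
  moreover have "(\<lambda>u. {u, v}) ` nbrs G v = {e \<in> edges G. v \<in> e}"
  proof (intro equalityI subsetI)
    fix e assume e: "e \<in> {e \<in> edges G. v \<in> e}"
    then obtain a b where "e = {a, b}" using g by (blast elim: graph_edgeE)
    with e show "e \<in> (\<lambda>u. {u, v}) ` nbrs G v"
      by (auto simp: nbrs_def insert_commute)
  qed (auto simp: nbrs_def)
  ultimately show ?thesis
    by (metis card_image deg_eq_card_nbrs)
qed

lemma finite_edges: "is_graph G \<Longrightarrow> finite (edges G)"
  by (rule finite_subset[of _ "Pow (verts G)"]) (auto elim!: graph_edgeE simp: finite_verts)

lemma sum_deg_eq_twice_card_edges:
  assumes g: "is_graph G"
  shows "(\<Sum>v\<in>verts G. deg G v) = 2 * card (edges G)"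
proof -
  have "card {v \<in> verts G. v \<in> e} = 2" if e: "e \<in> edges G" for e
  proof -
    obtain a b where "e = {a, b}" "a \<noteq> b" "a \<in> verts G" "b \<in> verts G"
      using graph_edgeE[OF g e] by blast
    then have "{v \<in> verts G. v \<in> e} = {a, b}" by auto
    then show ?thesis using \<open>a \<noteq> b\<close> by simp
  qed
  then have "(\<Sum>v\<in>verts G. card {e \<in> edges G. v \<in> e}) = 2 * card (edges G)"
    using sum_multicount[OF finite_verts[OF g] finite_edges[OF g]] by simp
  then show ?thesis
    using card_incident_edges[OF g] by simp
qed

lemma card_edges_tree:
  "is_tree G \<Longrightarrow> card (edges G) + 1 = card (verts G)"
proof (induction "card (verts G)" arbitrary: G rule: less_induct)
  case less
  have g: "is_graph G" using less.prems by (rule tree_is_graph)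
  show ?case
  proof (cases "card (verts G) \<le> 1")
    case True
    moreover have "card (verts G) \<noteq> 0"
      using less.prems finite_verts[OF g] unfolding is_tree_def by simp
    ultimately have "card (verts G) = 1" by simp
    then obtain x where x: "verts G = {x}" by (rule card_1_singletonE)
    have "edges G = {}"
      using g x unfolding is_graph_def by force
    then show ?thesis using x by simp
  next
    case False
    then have c: "2 \<le> card (verts G)" by simp
    obtain l where l: "l \<in> verts G" "deg G l = 1"
      using tree_has_leaf[OF less.prems c] .
    let ?G' = "del_vert G l"
    have cv: "card (verts ?G') = card (verts G) - 1"
      using l finite_verts[OF g] by simp
    have "card (verts ?G') < card (verts G)" using cv c by simp
    from less.hyps[OF this is_tree_del_leaf[OF less.prems l c]]
    have IH: "card (edges ?G') + 1 = card (verts ?G')" .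
    have "edges G = edges ?G' \<union> {e \<in> edges G. l \<in> e}" "edges ?G' \<inter> {e \<in> edges G. l \<in> e} = {}"
      by auto
    then have "card (edges G) = card (edges ?G') + card {e \<in> edges G. l \<in> e}"
      using finite_edges[OF g] by (metis card_Un_disjoint finite_Un)
    then show ?thesis using IH cv c card_incident_edges[OF g] l(2) by simp
  qed
qed

lemma tree_sum_deg:
  "is_tree G \<Longrightarrow> (\<Sum>v\<in>verts G. deg G v) + 2 = 2 * card (verts G)"
  using sum_deg_eq_twice_card_edges[OF tree_is_graph] card_edges_tree by fastforce

section \<open>Rays and the core\<close>

lemma ray_is_path: "ray G a s r \<Longrightarrow> is_path G r"
  by (simp add: ray_def two_path_def)

lemma ray_length: "ray G a s r \<Longrightarrow> length r = Suc a"
  by (simp add: ray_def two_path_def)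

lemma ray_length_pos: "ray G a s r \<Longrightarrow> 1 \<le> a"
  by (simp add: ray_def two_path_def)

lemma ray_first: "ray G a s r \<Longrightarrow> r ! 0 = s"
  by (simp add: ray_def)

lemma ray_end_deg: "ray G a s r \<Longrightarrow> deg G (r ! a) = 1"
  by (simp add: ray_def)

lemma ray_inner_deg: "ray G a s r \<Longrightarrow> 1 \<le> i \<Longrightarrow> i < a \<Longrightarrow> deg G (r ! i) = 2"
  by (simp add: ray_def two_path_def)

lemma ray_deg_le_2:
  assumes "ray G a s r" "1 \<le> j" "j \<le> a"
  shows "deg G (r ! j) \<le> 2"
  using ray_end_deg[OF assms(1)] ray_inner_deg[OF assms(1,2)] assms(3) by (cases "j = a") auto

lemma ray_last:
  assumes "ray G a s r"
  shows "last r = r ! a"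
proof -
  have "r \<noteq> []" using ray_length[OF assms] by auto
  then show ?thesis using ray_length[OF assms] by (simp add: last_conv_nth)
qed

lemma ray_set_subset: "ray G a s r \<Longrightarrow> set r \<subseteq> verts G"
  by (simp add: ray_def two_path_def is_path_def)

lemma ray_source:
  assumes "ray G a s r"
  shows "is_source G s"
proof -
  have "r ! 0 \<in> set r" using ray_length[OF assms] by simp
  then show ?thesis
    using assms ray_set_subset[OF assms] unfolding is_source_def ray_def by auto
qed

lemma ray_second_nbr:
  assumes "ray G a s r"
  shows "r ! 1 \<in> nbrs G s"
proof -
  have "Suc 0 < length r" using ray_length[OF assms] ray_length_pos[OF assms] by simp
  then show ?thesis using path_nbr_next[OF ray_is_path[OF assms], of 0] ray_first[OF assms] by simp
qed

lemma two_pathI: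
  assumes "is_path G xs" "2 \<le> length xs" "deg G (hd xs) \<noteq> 2" "deg G (last xs) \<noteq> 2"
    and "\<forall>i. 1 \<le> i \<and> Suc i < length xs \<longrightarrow> deg G (xs ! i) = 2"
  shows "two_path G (length xs - 1) xs"
proof -
  have "xs \<noteq> []" using assms(2) by auto
  then show ?thesis
    using assms unfolding two_path_def by (auto simp: hd_conv_nth last_conv_nth)
qed

lemma two_path_rev: "two_path G a xs \<Longrightarrow> two_path G a (rev xs)"
  unfolding two_path_def
  by (auto simp: is_path_rev rev_nth elim!: allE[where x = "a - i" for i])

lemma ray_rev_path:
  assumes p: "is_path G xs" and lx: "2 \<le> length xs"
    and ends: "deg G (hd xs) = 1" "2 < deg G (last xs)"
    and inner: "\<forall>i. 1 \<le> i \<and> Suc i < length xs \<longrightarrow> deg G (xs ! i) = 2"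
  shows "ray G (length xs - 1) (last xs) (rev xs)"
proof -
  have "two_path G (length xs - 1) xs" using two_pathI[OF p lx] ends inner by simp
  moreover have "xs \<noteq> []" using lx by auto
  ultimately show ?thesis
    using two_path_rev ends lx unfolding ray_def by (simp add: rev_nth last_conv_nth hd_conv_nth)
qed

definition core :: "'a graph \<Rightarrow> 'a \<Rightarrow> bool" where
  "core G v \<longleftrightarrow> v \<in> verts G \<and> \<not> (\<exists>a s r j. ray G a s r \<and> 1 \<le> j \<and> j \<le> a \<and> r ! j = v)"

definition core_nbrs :: "'a graph \<Rightarrow> 'a \<Rightarrow> 'a set" where
  "core_nbrs G v = {u \<in> nbrs G v. core G u}"

definition core_deg :: "'a graph \<Rightarrow> 'a \<Rightarrow> nat" where
  "core_deg G v = card (core_nbrs G v)"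

definition rays :: "'a graph \<Rightarrow> 'a \<Rightarrow> 'a list set" where
  "rays G s = {r. \<exists>a. ray G a s r}"

definition sources :: "'a graph \<Rightarrow> 'a set" where
  "sources G = {s. is_source G s}"

lemma core_in_verts: "core G v \<Longrightarrow> v \<in> verts G"
  by (simp add: core_def)

lemma source_is_core: "is_source G v \<Longrightarrow> core G v"
  unfolding core_def is_source_def by (auto dest: ray_deg_le_2)

lemma not_core_on_ray: "ray G a s r \<Longrightarrow> 1 \<le> j \<Longrightarrow> j \<le> a \<Longrightarrow> \<not> core G (r ! j)"
  unfolding core_def by blast

lemma core_subset_verts: "Collect (core G) \<subseteq> verts G"
  by (auto simp: core_def)

lemma finite_core: "is_graph G \<Longrightarrow> finite (Collect (core G))"
  using core_subset_verts finite_verts by (rule finite_subset)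

lemma finite_sources: "is_graph G \<Longrightarrow> finite (sources G)"
  using finite_verts by (rule finite_subset[rotated]) (auto simp: sources_def is_source_def)

lemma finite_core_nbrs: "is_graph G \<Longrightarrow> finite (core_nbrs G v)"
  using finite_nbrs by (rule finite_subset[rotated]) (auto simp: core_nbrs_def)

lemma core_deg_le_deg: "is_graph G \<Longrightarrow> core_deg G v \<le> deg G v"
  unfolding core_deg_def deg_eq_card_nbrs core_nbrs_def by (rule card_mono[OF finite_nbrs]) auto

lemma ray_nbrs:
  assumes r: "ray G a s r" and j: "1 \<le> j" "j \<le> a" and y: "y \<in> nbrs G (r ! j)"
  shows "y = r ! (j - 1) \<or> (j < a \<and> y = r ! Suc j)"
proof -
  have p: "is_path G r" and l: "length r = Suc a" using ray_is_path[OF r] ray_length[OF r] .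
  have prev: "r ! (j - 1) \<in> nbrs G (r ! j)"
    using path_nbr_prev[OF p, of "j - 1"] j l by simp
  show ?thesis
  proof (cases "j < a")
    case True
    have "card (nbrs G (r ! j)) = 2"
      using ray_inner_deg[OF r j(1) True] by (simp add: deg_eq_card_nbrs)
    moreover have "r ! Suc j \<in> nbrs G (r ! j)" "r ! (j - 1) \<noteq> r ! Suc j"
      using path_nbr_next[OF p, of j] path_nth_neq[OF p] True l by auto
    ultimately show ?thesis using card_eq_2_cases prev y True by metis
  next
    case False
    then have "card (nbrs G (r ! j)) = 1"
      using ray_end_deg[OF r] j by (simp add: deg_eq_card_nbrs)
    then show ?thesis using card_eq_1_imp_eq prev y by metis
  qed
qed

lemma ray_nbrs_subset:
  assumes r: "ray G a s r" and j: "1 \<le> j" "j \<le> a"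
  shows "nbrs G (r ! j) \<subseteq> set r"
proof
  fix y assume "y \<in> nbrs G (r ! j)"
  then have "y = r ! (j - 1) \<or> (j < a \<and> y = r ! Suc j)" by (rule ray_nbrs[OF r j])
  then show "y \<in> set r" using ray_length[OF r] j by auto
qed

lemma non_core_nbr_starts_ray:
  assumes x: "core G x" and y: "y \<in> nbrs G x" and ny: "\<not> core G y" and g: "is_graph G"
  obtains a r where "ray G a x r" "r ! 1 = y"
proof -
  have "y \<in> verts G" using nbrs_subset_verts[OF g] y by blast
  then obtain a s r j where r: "ray G a s r" and j: "1 \<le> j" "j \<le> a" and rj: "r ! j = y"
    using ny unfolding core_def by blast
  have "x = r ! (j - 1) \<or> (j < a \<and> x = r ! Suc j)"
    using ray_nbrs[OF r j] y rj nbrs_commute by metis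
  moreover have "\<not> (j < a \<and> x = r ! Suc j)"
    using x not_core_on_ray[OF r, of "Suc j"] by auto
  ultimately have xj: "x = r ! (j - 1)" by blast
  have "j = 1"
  proof (rule ccontr)
    assume "j \<noteq> 1"
    then have "1 \<le> j - 1" "j - 1 \<le> a" using j by auto
    then show False using x xj not_core_on_ray[OF r] by blast
  qed
  then show ?thesis using that r rj xj ray_first[OF r] by simp
qed

lemma two_path_unique:
  assumes x: "two_path G a xs" and y: "two_path G b ys"
    and start: "xs ! 0 = ys ! 0" "xs ! 1 = ys ! 1"
  shows "xs = ys"
proof -
  have px: "is_path G xs" and lx: "length xs = Suc a" and ax: "1 \<le> a"
    and ix: "\<And>i. 1 \<le> i \<Longrightarrow> i < a \<Longrightarrow> deg G (xs ! i) = 2" and ex: "deg G (xs ! a) \<noteq> 2"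
    using x by (auto simp: two_path_def)
  have py: "is_path G ys" and ly: "length ys = Suc b" and ay: "1 \<le> b"
    and iy: "\<And>i. 1 \<le> i \<Longrightarrow> i < b \<Longrightarrow> deg G (ys ! i) = 2" and ey: "deg G (ys ! b) \<noteq> 2"
    using y by (auto simp: two_path_def)
  have eq: "xs ! i = ys ! i" if "i < length xs" "i < length ys" for i
  proof (rule walk_determined_by_first_edge[where N = "nbrs G", OF _ _ start _ _ _ that])
    show "distinct xs" "distinct ys" using px py by (simp_all add: is_path_def)
  qed (use path_nbr_prev[OF px] path_nbr_next[OF px] path_nbr_next[OF py] ix lx
      in \<open>auto simp: deg_eq_card_nbrs\<close>)
  have "a = b"
  proof (rule ccontr)
    assume "a \<noteq> b"
    then show False
      using eq[of a] eq[of b] ix[of b] iy[of a] ex ey ax ay lx ly by (cases "a < b") auto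
  qed
  then show ?thesis using eq lx ly by (intro nth_equalityI) auto
qed

lemma ray_eqI_second:
  assumes "ray G a s r" "ray G b s r'" "r ! 1 = r' ! 1"
  shows "r = r'"
  using two_path_unique assms ray_first unfolding ray_def by metis

lemma ray_eqI_last:
  assumes r: "ray G a s r" and r': "ray G b s' r'" and e: "last r = last r'"
  shows "r = r'"
proof -
  have "r ! (a - 1) \<in> nbrs G (r ! a)" "r' ! (b - 1) \<in> nbrs G (r' ! b)"
    using path_nbr_prev[OF ray_is_path[OF r], of "a - 1"] path_nbr_prev[OF ray_is_path[OF r'], of "b - 1"]
      ray_length[OF r] ray_length[OF r'] ray_length_pos[OF r] ray_length_pos[OF r'] by simp_all
  moreover have "r ! a = r' ! b" using e ray_last[OF r] ray_last[OF r'] by simp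
  ultimately have "r ! (a - 1) = r' ! (b - 1)"
    using ray_end_deg[OF r] card_eq_1_imp_eq by (metis deg_eq_card_nbrs)
  moreover have "rev r ! 0 = r ! a" "rev r ! 1 = r ! (a - 1)"
    "rev r' ! 0 = r' ! b" "rev r' ! 1 = r' ! (b - 1)"
    using ray_length[OF r] ray_length[OF r'] ray_length_pos[OF r] ray_length_pos[OF r']
    by (simp_all add: rev_nth)
  ultimately have "rev r = rev r'"
    using two_path_unique[OF two_path_rev two_path_rev] r r' \<open>r ! a = r' ! b\<close>
    unfolding ray_def by metis
  then show ?thesis by simp
qed

lemma finite_rays: "is_graph G \<Longrightarrow> finite (rays G s)"
  by (rule finite_subset[OF _ finite_paths]) (auto simp: rays_def dest: ray_is_path)

lemma finite_rays_of_length: "is_graph G \<Longrightarrow> finite {r. ray G a s r}"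
  by (rule finite_subset[OF _ finite_rays]) (auto simp: rays_def)

lemma nbrs_eq_core_nbrs_Un_rays:
  assumes g: "is_graph G" and x: "core G x"
  shows "nbrs G x = core_nbrs G x \<union> (\<lambda>r. r ! 1) ` rays G x"
proof (intro equalityI subsetI)
  fix y assume y: "y \<in> nbrs G x"
  show "y \<in> core_nbrs G x \<union> (\<lambda>r. r ! 1) ` rays G x"
  proof (cases "core G y")
    case True
    then show ?thesis using y by (simp add: core_nbrs_def)
  next
    case False
    then obtain a r where "ray G a x r" "r ! 1 = y"
      using non_core_nbr_starts_ray[OF x y _ g] by blast
    then show ?thesis unfolding rays_def by blast
  qed
next
  fix y assume "y \<in> core_nbrs G x \<union> (\<lambda>r. r ! 1) ` rays G x"
  then show "y \<in> nbrs G x"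
  proof
    assume "y \<in> (\<lambda>r. r ! 1) ` rays G x"
    then obtain a r where "ray G a x r" "y = r ! 1" unfolding rays_def by blast
    then show ?thesis using ray_second_nbr[of G a x r] by simp
  qed (simp add: core_nbrs_def)
qed

lemma deg_eq_core_deg_plus_rays:
  assumes g: "is_graph G" and x: "core G x"
  shows "deg G x = core_deg G x + card (rays G x)"
proof -
  have inj: "inj_on (\<lambda>r. r ! 1) (rays G x)"
    by (auto simp: inj_on_def rays_def intro: ray_eqI_second)
  have "\<not> core G (r ! 1)" if "r \<in> rays G x" for r
    using that not_core_on_ray[of G _ x r 1] ray_length_pos[of G _ x r] unfolding rays_def by blast
  then have "core_nbrs G x \<inter> (\<lambda>r. r ! 1) ` rays G x = {}"
    unfolding core_nbrs_def by blast
  then have "deg G x = core_deg G x + card ((\<lambda>r. r ! 1) ` rays G x)"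
    unfolding deg_eq_card_nbrs core_deg_def nbrs_eq_core_nbrs_Un_rays[OF g x]
    using finite_core_nbrs[OF g] finite_rays[OF g] by (simp add: card_Un_disjoint)
  then show ?thesis using card_image[OF inj] by simp
qed

lemma card_le_fork_number:
  assumes g: "is_graph G" and I: "independent G I" "\<forall>s\<in>I. is_fork G a b s"
  shows "card I \<le> fork_number G a b"
  unfolding fork_number_def
proof (rule Max_ge)
  have "{card I | I. independent G I \<and> (\<forall>s\<in>I. is_fork G a b s)} \<subseteq> {..card (verts G)}"
    using card_mono[OF finite_verts[OF g]] unfolding independent_def by auto
  then show "finite {card I | I. independent G I \<and> (\<forall>s\<in>I. is_fork G a b s)}"
    by (rule finite_subset) simp
qed (use I in blast)

lemma degL_len_le_star_number:
  assumes g: "is_graph G"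
  shows "degL_len G c s \<le> star_number G c"
  unfolding degL_len_def star_number_def
proof (rule Max_ge)
  have "R \<subseteq> {xs. is_path G xs}" if "is_star G c R" for R
    using that unfolding is_star_def by (auto dest: ray_is_path)
  then have "{card R | R. finite R \<and> is_star G c R} \<subseteq> {..card {xs. is_path G xs}}"
    using card_mono[OF finite_paths[OF g]] by auto
  then show "finite {card R | R. finite R \<and> is_star G c R}"
    by (rule finite_subset) simp
  show "card {xs. ray G c s xs} \<in> {card R | R. finite R \<and> is_star G c R}"
    using finite_rays_of_length[OF g] by (auto simp: is_star_def)
qed

lemma le_C_number:
  assumes g: "is_graph G" and c: "C_gadget G d k xs"
  shows "k \<le> C_number G d"
  unfolding C_number_def
proof (rule Max_ge)
  have "{k. \<exists>xs. C_gadget G d k xs} \<subseteq> {..card (verts G)}"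
    using length_path_le_card_verts[OF g] unfolding C_gadget_def by force
  then show "finite {k. \<exists>xs. C_gadget G d k xs}"
    by (rule finite_subset) simp
qed (use c in blast)

lemma ray_is_C_gadget:
  assumes "ray G a s r"
  shows "C_gadget G 1 a r"
  unfolding C_gadget_def
  using ray_is_path[OF assms] ray_length[OF assms] ray_inner_deg[OF assms] by simp

lemma ray_length_le_C_number: "is_graph G \<Longrightarrow> ray G a s r \<Longrightarrow> a \<le> C_number G 1"
  by (rule le_C_number[OF _ ray_is_C_gadget])

lemma matching_split_number_le:
  assumes g: "is_graph G" and S: "S \<subseteq> verts G"
    and split: "\<forall>v\<in>verts G - S. card {u \<in> verts G - S. {u, v} \<in> edges G} \<le> 1"
  shows "matching_split_number G \<le> card S"
  unfolding matching_split_number_def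
proof (rule Min_le)
  have "{card S | S. S \<subseteq> verts G \<and>
      (\<forall>v\<in>verts G - S. card {u \<in> verts G - S. {u, v} \<in> edges G} \<le> 1)} \<subseteq> {..card (verts G)}"
    using card_mono[OF finite_verts[OF g]] by auto
  then show "finite {card S | S. S \<subseteq> verts G \<and>
      (\<forall>v\<in>verts G - S. card {u \<in> verts G - S. {u, v} \<in> edges G} \<le> 1)}"
    by (rule finite_subset) simp
qed (use S split in blast)

lemma matching_split_number_le_card_verts: "is_graph G \<Longrightarrow> matching_split_number G \<le> card (verts G)"
  by (rule matching_split_number_le) auto

section \<open>A leaf in the core\<close>

lemma verts_subset_leaf_path:
  assumes t: "is_tree G" and p: "is_path G xs" and lx: "2 \<le> length xs"
    and ends: "deg G (hd xs) = 1" "deg G (last xs) = 1"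
    and inner: "\<forall>i. 1 \<le> i \<and> Suc i < length xs \<longrightarrow> deg G (xs ! i) = 2"
  shows "verts G \<subseteq> set xs"
proof (rule tree_closed_subset[OF t])
  have g: "is_graph G" using t by (rule tree_is_graph)
  have ne: "xs \<noteq> []" using lx by auto
  show "hd xs \<in> set xs" "hd xs \<in> verts G" using p ne by (auto simp: is_path_def)
  fix x u assume "x \<in> set xs" "u \<in> nbrs G x"
  then obtain i where i: "i < length xs" "xs ! i = x" by (auto simp: in_set_conv_nth)
  have "deg G x \<le> card (set xs \<inter> nbrs G x)"
  proof (cases "i = 0 \<or> i = length xs - 1")
    case True
    then have "xs ! 1 \<in> set xs \<inter> nbrs G x \<or> xs ! (length xs - 2) \<in> set xs \<inter> nbrs G x"
      using path_nbr_next[OF p, of 0] path_last_nbr[OF p lx] i lx ne by (auto simp: last_conv_nth)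
    moreover have "deg G x = 1"
      using True ends i ne by (auto simp: hd_conv_nth last_conv_nth)
    ultimately show ?thesis
      using finite_nbrs[OF g] by (metis One_nat_def card_gt_0_iff empty_iff finite_Int Suc_leI)
  next
    case False
    then have "{xs ! (i - 1), xs ! Suc i} \<subseteq> set xs \<inter> nbrs G x" "xs ! (i - 1) \<noteq> xs ! Suc i"
      using path_nbr_prev[OF p, of "i - 1"] path_nbr_next[OF p, of i] path_nth_neq[OF p] i by auto
    moreover have "deg G x = 2" using inner False i by auto
    ultimately show ?thesis
      using finite_nbrs[OF g] by (metis card_2_iff card_mono finite_Int)
  qed
  then show "u \<in> set xs"
    using nbrs_subset_if_deg_le[OF g] \<open>u \<in> nbrs G x\<close> by blast
qed

text \<open>If a leaf lies in the core, the maximal path from it through vertices of degree 2 cannot end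
  in a source (it would be a ray containing the leaf), so it ends in a leaf and the tree is a path.\<close>
lemma card_verts_le_if_core_leaf:
  assumes t: "is_tree G" and l: "l \<in> verts G" "deg G l = 1" "core G l"
  shows "card (verts G) \<le> Suc (C_number G 1)"
proof -
  have g: "is_graph G" using t by (rule tree_is_graph)
  obtain u where u: "u \<in> nbrs G l"
    using l(2) by (metis card_eq_0_iff deg_eq_card_nbrs equals0I zero_neq_one)
  then have e: "{l, u} \<in> edges G" by (simp add: nbrs_def insert_commute)
  obtain xs where p: "is_path G xs" and lx: "2 \<le> length xs" and x0: "xs ! 0 = l"
    and inner: "\<forall>i. 1 \<le> i \<and> Suc i < length xs \<longrightarrow> deg G (xs ! i) = 2"
    and stop: "deg G (last xs) = 2 \<Longrightarrow> nbrs G (last xs) \<inter> verts G \<subseteq> {xs ! (length xs - 2)}"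
    using maximal_path[OF t order_refl e l(1) edge_endpoints(2)[OF g e], of "\<lambda>v. deg G v = 2"]
    by blast
  have ne: "xs \<noteq> []" using lx by auto
  then have hd: "hd xs = l" using x0 by (simp add: hd_conv_nth)
  have "deg G (last xs) \<noteq> 2"
  proof
    assume "deg G (last xs) = 2"
    then have "nbrs G (last xs) \<subseteq> {xs ! (length xs - 2)}"
      using stop nbrs_subset_verts[OF g] by blast
    then have "deg G (last xs) \<le> 1"
      using card_mono[of "{xs ! (length xs - 2)}"] by (simp add: deg_eq_card_nbrs)
    then show False using \<open>deg G (last xs) = 2\<close> by simp
  qed
  moreover have "\<not> 2 < deg G (last xs)"
  proof
    assume "2 < deg G (last xs)"
    then have "ray G (length xs - 1) (last xs) (rev xs)"
      using ray_rev_path[OF p lx] hd l(2) inner by simp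
    then have "\<not> core G (rev xs ! (length xs - 1))"
      using lx by (intro not_core_on_ray) auto
    then show False using l(3) x0 lx by (simp add: rev_nth)
  qed
  moreover have "0 < deg G (last xs)"
    using path_last_nbr[OF p lx] finite_nbrs[OF g] by (auto simp: deg_eq_card_nbrs card_gt_0_iff)
  ultimately have "deg G (last xs) = 1" by linarith
  then have "card (verts G) \<le> length xs"
    using verts_subset_leaf_path[OF t p lx] hd l(2) inner card_mono[of "set xs"] card_set_path[OF p]
    by (metis List.finite_set)
  moreover have "C_gadget G 1 (length xs - 1) xs"
    unfolding C_gadget_def using p lx inner by auto
  ultimately show ?thesis using le_C_number[OF g] by fastforce
qed

section \<open>Counting the core\<close>

lemma core_not_source:
  assumes t: "is_tree G" and c: "2 \<le> card (verts G)"
    and leaves: "\<forall>v\<in>verts G. deg G v = 1 \<longrightarrow> \<not> core G v"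
    and v: "core G v" "\<not> is_source G v"
  shows "deg G v = 2" "core_deg G v = 2"
proof -
  have vV: "v \<in> verts G" using v(1) by (rule core_in_verts)
  show d2: "deg G v = 2"
    using tree_deg_pos[OF t c vV] leaves vV v unfolding is_source_def by fastforce
  have "rays G v = {}"
    using v(2) unfolding rays_def by (auto dest: ray_source)
  then show "core_deg G v = 2"
    using deg_eq_core_deg_plus_rays[OF tree_is_graph[OF t] v(1)] d2 by simp
qed

lemma leaf_is_ray_end:
  assumes leaves: "\<forall>v\<in>verts G. deg G v = 1 \<longrightarrow> \<not> core G v"
    and l: "l \<in> verts G" "deg G l = 1"
  obtains a s r where "ray G a s r" "last r = l"
proof -
  obtain a s r j where r: "ray G a s r" "1 \<le> j" "j \<le> a" "r ! j = l"
    using leaves l unfolding core_def by blast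
  have "j = a"
    using ray_inner_deg[OF r(1) r(2)] r(3,4) l(2) by (cases "j < a") auto
  then show ?thesis using that r ray_last[OF r(1)] by simp
qed

lemma sum_card_rays_eq_card_leaves:
  assumes g: "is_graph G" and leaves: "\<forall>v\<in>verts G. deg G v = 1 \<longrightarrow> \<not> core G v"
  shows "(\<Sum>s\<in>sources G. card (rays G s)) = card {v \<in> verts G. deg G v = 1}"
proof -
  let ?R = "\<Union>s\<in>sources G. rays G s"
  have "rays G s \<inter> rays G s' = {}" if "s \<noteq> s'" for s s'
    using that unfolding rays_def by (auto dest: ray_first)
  then have "card ?R = (\<Sum>s\<in>sources G. card (rays G s))"
    using finite_sources[OF g] finite_rays[OF g] by (intro card_UN_disjoint) auto
  moreover have "inj_on last ?R"
  proof (rule inj_onI)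
    fix r r' assume "r \<in> ?R" "r' \<in> ?R" "last r = last r'"
    then show "r = r'" unfolding rays_def using ray_eqI_last[of G] by auto
  qed
  moreover have "last ` ?R = {v \<in> verts G. deg G v = 1}"
  proof (intro equalityI subsetI)
    fix v assume "v \<in> last ` ?R"
    then obtain r s a where r: "ray G a s r" and v: "v = last r" unfolding rays_def by auto
    have "r ! a \<in> set r" using ray_length[OF r] by simp
    then show "v \<in> {v \<in> verts G. deg G v = 1}"
      using v ray_last[OF r] ray_set_subset[OF r] ray_end_deg[OF r] by auto
  next
    fix v assume "v \<in> {v \<in> verts G. deg G v = 1}"
    then obtain a s r where r: "ray G a s r" and l: "last r = v"
      by (auto elim: leaf_is_ray_end[OF leaves])
    then have "r \<in> ?R" using ray_source[OF r] unfolding rays_def sources_def by auto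
    then show "v \<in> last ` ?R" using l by auto
  qed
  ultimately show ?thesis using card_image[of last ?R] by simp
qed

text \<open>The degree sum of the tree, with the leaves accounted for by the rays ending in them.\<close>
lemma sum_core_deg_sources:
  assumes t: "is_tree G" and c: "2 \<le> card (verts G)"
    and leaves: "\<forall>v\<in>verts G. deg G v = 1 \<longrightarrow> \<not> core G v"
  shows "(\<Sum>s\<in>sources G. core_deg G s) + 2 = 2 * card (sources G)"
proof -
  have g: "is_graph G" using t by (rule tree_is_graph)
  define L where "L = {v \<in> verts G. deg G v = 1}"
  define D where "D = {v \<in> verts G. deg G v = 2}"
  have V: "verts G = L \<union> D \<union> sources G"
    using tree_deg_pos[OF t c] unfolding L_def D_def by (force simp: sources_def is_source_def)
  have fin: "finite L" "finite D" "finite (sources G)"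
    using finite_verts[OF g] finite_sources[OF g] unfolding L_def D_def by auto
  have disj: "L \<inter> D = {}" "(L \<union> D) \<inter> sources G = {}"
    unfolding L_def D_def by (auto simp: sources_def is_source_def)
  have "deg G v = core_deg G v + card (rays G v)" if "v \<in> sources G" for v
    using that deg_eq_core_deg_plus_rays[OF g source_is_core] by (simp add: sources_def)
  then have "(\<Sum>v\<in>sources G. deg G v) = (\<Sum>v\<in>sources G. core_deg G v + card (rays G v))"
    by (rule sum.cong[OF refl])
  also have "\<dots> = (\<Sum>v\<in>sources G. core_deg G v) + card L"
    using sum_card_rays_eq_card_leaves[OF g leaves] unfolding L_def by (simp add: sum.distrib)
  moreover have "(\<Sum>v\<in>verts G. deg G v) = card L + 2 * card D + (\<Sum>v\<in>sources G. deg G v)"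
    unfolding V using fin disj by (simp add: sum.union_disjoint L_def D_def)
  moreover have "card (verts G) = card L + card D + card (sources G)"
    unfolding V using fin disj by (simp add: card_Un_disjoint)
  ultimately show ?thesis using tree_sum_deg[OF t] by simp
qed

text \<open>The sources of core degree other than 2 are the leaves and branch vertices of the core; as in
  any tree, the branch vertices are outnumbered by the leaves.\<close>
lemma card_core_deg_ne_2_sources:
  assumes t: "is_tree G" and c: "2 \<le> card (verts G)"
    and leaves: "\<forall>v\<in>verts G. deg G v = 1 \<longrightarrow> \<not> core G v"
  defines "A \<equiv> {s \<in> sources G. core_deg G s \<noteq> 2}"
  shows "card A + 2 \<le> 3 * card {s \<in> sources G. core_deg G s = 0} + 2 * card {s \<in> sources G. core_deg G s = 1}"
    and "(\<Sum>s\<in>A. core_deg G s) \<le> 2 * card A"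
proof -
  have fS: "finite (sources G)" using finite_sources[OF tree_is_graph[OF t]] .
  define B where "B = {s \<in> sources G. core_deg G s = 2}"
  have split: "sources G = A \<union> B" "A \<inter> B = {}" unfolding A_def B_def by auto
  have fin: "finite A" "finite B" using fS unfolding A_def B_def by auto
  have "(\<Sum>s\<in>B. core_deg G s) = 2 * card B" unfolding B_def by simp
  then have "(\<Sum>s\<in>sources G. core_deg G s) = (\<Sum>s\<in>A. core_deg G s) + 2 * card B"
    unfolding split(1) using fin split(2) by (simp add: sum.union_disjoint)
  moreover have "card (sources G) = card A + card B"
    unfolding split(1) using fin split(2) by (simp add: card_Un_disjoint)
  ultimately have "(\<Sum>s\<in>A. core_deg G s) + 2 = 2 * card A"
    using sum_core_deg_sources[OF t c leaves] by simp
  then show "(\<Sum>s\<in>A. core_deg G s) \<le> 2 * card A" by simp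
  have cd_eq: "A \<inter> {s. core_deg G s = 0} = {s \<in> sources G. core_deg G s = 0}"
    "A \<inter> {s. core_deg G s = 1} = {s \<in> sources G. core_deg G s = 1}"
    unfolding A_def by auto
  have "(\<Sum>s\<in>A. 3::nat) \<le> (\<Sum>s\<in>A. core_deg G s + 3 * of_bool (core_deg G s = 0) + 2 * of_bool (core_deg G s = 1))"
    by (rule sum_mono) (auto simp: A_def)
  also have "\<dots> = (\<Sum>s\<in>A. core_deg G s) + 3 * card {s \<in> sources G. core_deg G s = 0}
      + 2 * card {s \<in> sources G. core_deg G s = 1}"
    using fin(1) by (simp add: sum.distrib sum_distrib_left[symmetric] sum_of_bool_eq cd_eq[simplified])
  finally show "card A + 2 \<le> 3 * card {s \<in> sources G. core_deg G s = 0} + 2 * card {s \<in> sources G. core_deg G s = 1}"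
    using \<open>(\<Sum>s\<in>A. core_deg G s) + 2 = 2 * card A\<close> by simp
qed

text \<open>A source without core neighbours is, together with its rays, the whole tree.\<close>
lemma core_deg_0_source_unique:
  assumes t: "is_tree G" and s: "is_source G s" "core_deg G s = 0" and u: "is_source G u"
  shows "u = s"
proof (rule ccontr)
  assume "u \<noteq> s"
  have g: "is_graph G" using t by (rule tree_is_graph)
  define X where "X = insert s (\<Union>r\<in>rays G s. set r)"
  have on_ray: "\<exists>a r j. ray G a s r \<and> 1 \<le> j \<and> j \<le> a \<and> x = r ! j" if x: "x \<in> X" "x \<noteq> s" for x
  proof -
    obtain a r where r: "ray G a s r" "x \<in> set r" using x unfolding X_def rays_def by auto
    then obtain j where "j < length r" "r ! j = x" by (auto simp: in_set_conv_nth)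
    moreover have "j \<noteq> 0" using calculation ray_first[OF r(1)] x(2) by (cases j) auto
    ultimately show ?thesis using r(1) ray_length[OF r(1)] by (intro exI[of _ a] exI[of _ r] exI[of _ j]) auto
  qed
  have "verts G \<subseteq> X"
  proof (rule tree_closed_subset[OF t])
    show "s \<in> X" "s \<in> verts G" using s(1) by (simp_all add: X_def is_source_def)
  next
    fix x y assume x: "x \<in> X" and y: "y \<in> nbrs G x"
    show "y \<in> X"
    proof (cases "x = s")
      case True
      have "core_nbrs G s = {}" using s(2) finite_core_nbrs[OF g] by (simp add: core_deg_def)
      then have "\<not> core G y" using y True by (auto simp: core_nbrs_def)
      then obtain a r where "ray G a s r" "r ! 1 = y"
        using non_core_nbr_starts_ray[OF source_is_core[OF s(1)] _ _ g] y True by blast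
      moreover have "1 < length r" using ray_length ray_length_pos calculation(1) by fastforce
      ultimately show ?thesis unfolding X_def rays_def by force
    next
      case False
      then obtain a r j where r: "ray G a s r" "1 \<le> j" "j \<le> a" "x = r ! j"
        using on_ray[OF x False] by auto
      then have "y \<in> set r" using ray_nbrs_subset[OF r(1-3)] y by auto
      then show ?thesis using r(1) unfolding X_def rays_def by auto
    qed
  qed
  then obtain a r j where "ray G a s r" "1 \<le> j" "j \<le> a" "u = r ! j"
    using on_ray u \<open>u \<noteq> s\<close> unfolding is_source_def by blast
  then show False using ray_deg_le_2 u unfolding is_source_def by fastforce
qed

lemma card_core_deg_0_sources_le_1:
  assumes t: "is_tree G"
  shows "card {s \<in> sources G. core_deg G s = 0} \<le> 1"
  using core_deg_0_source_unique[OF t] finite_sources[OF tree_is_graph[OF t]]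
  by (simp add: card_le_Suc0_iff_eq sources_def)

lemma fork_if_core_deg_1:
  assumes g: "is_graph G" and s: "is_source G s" "core_deg G s = 1"
  obtains a b where "0 < a" "a \<le> C_number G 1" "0 < b" "b \<le> C_number G 1" "is_fork G a b s"
proof -
  have ds: "deg G s = 1 + card (rays G s)"
    using deg_eq_core_deg_plus_rays[OF g source_is_core[OF s(1)]] s(2) by simp
  then have "1 < card (rays G s)" using s(1) unfolding is_source_def by simp
  then have "\<not> (\<forall>r1\<in>rays G s. \<forall>r2\<in>rays G s. r1 = r2)"
    using card_le_Suc0_iff_eq[OF finite_rays[OF g], of s] by linarith
  then obtain r1 r2 where r12: "r1 \<in> rays G s" "r2 \<in> rays G s" "r1 \<noteq> r2"
    by auto
  then obtain a1 a2 where r1: "ray G a1 s r1" and r2: "ray G a2 s r2" unfolding rays_def by auto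
  have fin: "finite {xs. ray G a s xs}" for a by (rule finite_rays_of_length[OF g])
  have "degLbar G s = 1"
    using ds by (simp add: degLbar_def degL_def rays_def)
  moreover have "0 < degL_len G a1 s" "0 < degL_len G a2 s"
    using fin r1 r2 by (auto simp: degL_len_def card_gt_0_iff)
  moreover have "1 < degL_len G a1 s" if "a1 = a2"
  proof -
    have "{r1, r2} \<subseteq> {xs. ray G a1 s xs}" using r1 r2 that by simp
    then have "card {r1, r2} \<le> degL_len G a1 s"
      unfolding degL_len_def by (rule card_mono[OF fin])
    then show ?thesis using r12(3) by simp
  qed
  ultimately have "is_fork G a1 a2 s"
    using s(1) unfolding is_fork_def by auto
  then show ?thesis
    using that[of a1 a2] ray_length_pos[OF r1] ray_length_pos[OF r2]
      ray_length_le_C_number[OF g r1] ray_length_le_C_number[OF g r2] by simp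
qed

text \<open>Sources of core degree 1 see at most one other such source, so half of any set of them is
  independent.\<close>
lemma card_fork_class_le:
  assumes g: "is_graph G" and Q: "Q \<subseteq> {s \<in> sources G. core_deg G s = 1}" "finite Q"
    and forks: "\<forall>s\<in>Q. is_fork G a b s"
  shows "card Q \<le> 2 * fork_number G a b"
proof -
  let ?adj = "\<lambda>u v. {u, v} \<in> edges G"
  have "t = t'" if "s \<in> Q" "t \<in> Q" "t' \<in> Q" "?adj s t" "?adj s t'" for s t t'
  proof -
    have "t \<in> core_nbrs G s" "t' \<in> core_nbrs G s" "card (core_nbrs G s) = 1"
      using that Q(1) source_is_core[of G] by (auto simp: core_nbrs_def nbrs_def sources_def core_deg_def insert_commute)
    then show ?thesis by (rule card_eq_1_imp_eq[rotated 1])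
  qed
  moreover have "?adj u v \<Longrightarrow> ?adj v u" for u v by (simp add: insert_commute)
  ultimately obtain I where I: "I \<subseteq> Q" "\<forall>u\<in>I. \<forall>v\<in>I. u \<noteq> v \<longrightarrow> \<not> ?adj u v" "card Q \<le> 2 * card I"
    using independent_subset_half[OF Q(2), of ?adj] by blast
  have "independent G I"
    unfolding independent_def
  proof (intro conjI ballI)
    show "I \<subseteq> verts G" using I(1) Q(1) by (auto simp: sources_def is_source_def)
    fix u v assume "u \<in> I" "v \<in> I"
    then show "{u, v} \<notin> edges G" using I(2) edge_endpoints(3)[OF g, of u v] by (cases "u = v") auto
  qed
  moreover have "\<forall>s\<in>I. is_fork G a b s" using forks I(1) by blast
  ultimately have "card I \<le> fork_number G a b"
    by (rule card_le_fork_number[OF g])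
  then show ?thesis using I(3) by simp
qed

lemma card_core_deg_1_sources_le:
  assumes g: "is_graph G" and forks: "\<forall>a b. 0 < a \<longrightarrow> 0 < b \<longrightarrow> fork_number G a b < BF"
  shows "card {s \<in> sources G. core_deg G s = 1} \<le> C_number G 1 * C_number G 1 * (2 * BF)"
proof -
  let ?A = "{s \<in> sources G. core_deg G s = 1}"
  let ?P = "{1..C_number G 1} \<times> {1..C_number G 1}"
  define type where "type s = (SOME p. p \<in> ?P \<and> is_fork G (fst p) (snd p) s)" for s
  have type: "type s \<in> ?P \<and> is_fork G (fst (type s)) (snd (type s)) s" if s: "s \<in> ?A" for s
  proof -
    have "is_source G s" "core_deg G s = 1" using s by (simp_all add: sources_def)
    then obtain a b where "0 < a" "a \<le> C_number G 1" "0 < b" "b \<le> C_number G 1" "is_fork G a b s"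
      by (rule fork_if_core_deg_1[OF g])
    then have "\<exists>p. p \<in> ?P \<and> is_fork G (fst p) (snd p) s"
      by (intro exI[of _ "(a, b)"]) auto
    then show ?thesis unfolding type_def by (rule someI_ex)
  qed
  have "card ?A \<le> card ?P * (2 * BF)"
  proof (rule card_le_mult_if_fibres_le[of ?P type])
    show "type ` ?A \<subseteq> ?P" using type by blast
    fix p assume p: "p \<in> ?P"
    have "card {s \<in> ?A. type s = p} \<le> 2 * fork_number G (fst p) (snd p)"
      using type finite_sources[OF g] by (intro card_fork_class_le[OF g]) auto
    also have "\<dots> \<le> 2 * BF" using forks p by (auto simp: less_imp_le)
    finally show "card {s \<in> ?A. type s = p} \<le> 2 * BF" .
  qed simp
  then show ?thesis by simp
qed

lemma card_core_deg_ne_2_sources_le: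
  assumes t: "is_tree G" and c: "2 \<le> card (verts G)"
    and leaves: "\<forall>v\<in>verts G. deg G v = 1 \<longrightarrow> \<not> core G v"
    and forks: "\<forall>a b. 0 < a \<longrightarrow> 0 < b \<longrightarrow> fork_number G a b < BF"
  shows "card {s \<in> sources G. core_deg G s \<noteq> 2} \<le> 1 + 4 * C_number G 1 * C_number G 1 * BF"
  using card_core_deg_ne_2_sources(1)[OF t c leaves] card_core_deg_0_sources_le_1[OF t]
    card_core_deg_1_sources_le[OF tree_is_graph[OF t] forks]
  by linarith

lemma core_path_nbrs:
  assumes p: "is_path G c" and core: "\<forall>x\<in>set c. core G x" and i: "Suc i < length c"
  shows "c ! i \<in> core_nbrs G (c ! Suc i)" "c ! Suc i \<in> core_nbrs G (c ! i)"
  using path_nbr_prev[OF p i] path_nbr_next[OF p i] core nth_mem[of i c] nth_mem[OF i] i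
  by (simp_all add: core_nbrs_def)

lemma core_nbrs_inner_core_path:
  assumes g: "is_graph G" and p: "is_path G ch" and core: "\<forall>x\<in>set ch. core G x"
    and i: "1 \<le> i" "Suc i < length ch" and cd: "core_deg G (ch ! i) = 2"
  shows "core_nbrs G (ch ! i) = {ch ! (i - 1), ch ! Suc i}"
proof -
  have sub: "{ch ! (i - 1), ch ! Suc i} \<subseteq> core_nbrs G (ch ! i)" and "ch ! (i - 1) \<noteq> ch ! Suc i"
    using core_path_nbrs[OF p core, of "i - 1"] core_path_nbrs[OF p core, of i] path_nth_neq[OF p] i
    by auto
  then show ?thesis
    using card_seteq[OF finite_core_nbrs[OF g] sub] cd by (simp add: core_deg_def)
qed

text \<open>Besides its two neighbours on the path, an inner source has only non-core neighbours, and each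
  of them starts a ray, of length at most \<open>C_number G 1\<close>.\<close>
lemma core_path_is_C_gadget:
  assumes g: "is_graph G" and p: "is_path G ch" and core: "\<forall>x\<in>set ch. core G x"
    and inner: "\<forall>i. 1 \<le> i \<and> Suc i < length ch \<longrightarrow> core_deg G (ch ! i) = 2"
    and d: "C_number G 1 \<le> d"
  shows "C_gadget G d (length ch - 1) ch"
  unfolding C_gadget_def
proof (intro conjI allI impI)
  show "is_path G ch" by fact
  show "length ch = Suc (length ch - 1)" using p by (simp add: is_path_def)
  fix i assume "1 \<le> i \<and> i < length ch - 1"
  then have i: "1 \<le> i" "Suc i < length ch" by auto
  let ?x = "ch ! i"
  have cn: "core_nbrs G ?x = {ch ! (i - 1), ch ! Suc i}"
    using core_nbrs_inner_core_path[OF g p core i] inner i by simp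
  show "deg G ?x = 2 \<or> (is_source G ?x \<and> (\<forall>v. {v, ?x} \<in> edges G \<and> v \<noteq> ch ! (i - 1) \<and> v \<noteq> ch ! Suc i \<longrightarrow>
      (\<exists>a r. a \<le> d \<and> ray G a ?x r \<and> v \<in> set r)))"
  proof (cases "deg G ?x = 2")
    case False
    have "core G ?x" using core i by simp
    moreover have "2 \<le> deg G ?x"
      using core_deg_le_deg[OF g, of ?x] inner i by simp
    ultimately have src: "is_source G ?x"
      using False core_in_verts unfolding is_source_def by fastforce
    have "\<exists>a r. a \<le> d \<and> ray G a ?x r \<and> v \<in> set r"
      if v: "{v, ?x} \<in> edges G" "v \<noteq> ch ! (i - 1)" "v \<noteq> ch ! Suc i" for v
    proof -
      have vn: "v \<in> nbrs G ?x" using v(1) by (simp add: nbrs_def)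
      then have "\<not> core G v" using cn v(2,3) by (auto simp: core_nbrs_def)
      then obtain a r where r: "ray G a ?x r" "r ! 1 = v"
        using non_core_nbr_starts_ray[OF \<open>core G ?x\<close> vn _ g] by blast
      moreover have "v \<in> set r"
        using r ray_length[OF r(1)] ray_length_pos[OF r(1)] nth_mem[of 1 r] by simp
      ultimately show ?thesis
        using ray_length_le_C_number[OF g r(1)] d by (intro exI[of _ a] exI[of _ r]) simp
    qed
    then show ?thesis using src by blast
  qed simp
qed

definition core_chain :: "'a graph \<Rightarrow> 'a \<Rightarrow> 'a list \<Rightarrow> bool" where
  "core_chain G v ch \<longleftrightarrow> is_path G ch \<and> (\<forall>x\<in>set ch. core G x) \<and> 2 \<le> length ch \<and>
     is_source G (ch ! 0) \<and> core_deg G (ch ! 0) \<noteq> 2 \<and> last ch = v \<and>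
     (\<forall>i. 1 \<le> i \<and> i < length ch \<longrightarrow> core_deg G (ch ! i) = 2)"

lemma core_chain_exists:
  assumes t: "is_tree G" and c: "2 \<le> card (verts G)"
    and leaves: "\<forall>v\<in>verts G. deg G v = 1 \<longrightarrow> \<not> core G v"
    and v: "core G v" "core_deg G v = 2"
  shows "\<exists>ch. core_chain G v ch"
proof -
  have "core_nbrs G v \<noteq> {}" using v(2) by (auto simp: core_deg_def)
  then obtain w where "w \<in> core_nbrs G v" by blast
  then have e: "{v, w} \<in> edges G" "v \<in> Collect (core G)" "w \<in> Collect (core G)"
    using v(1) by (simp_all add: core_nbrs_def nbrs_def insert_commute)
  obtain xs where p: "is_path G xs" and core: "set xs \<subseteq> Collect (core G)" and lx: "2 \<le> length xs"
    and x0: "xs ! 0 = v" and "xs ! 1 = w"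
    and inner: "\<forall>i. 1 \<le> i \<and> Suc i < length xs \<longrightarrow> core_deg G (xs ! i) = 2"
    and stop: "core_deg G (last xs) = 2 \<Longrightarrow> nbrs G (last xs) \<inter> Collect (core G) \<subseteq> {xs ! (length xs - 2)}"
    by (rule maximal_path[OF t core_subset_verts e, where P = "\<lambda>x. core_deg G x = 2"]) (rule that)
  have ne: "xs \<noteq> []" using lx by auto
  have core_last: "core G (last xs)" using core last_in_set[OF ne] by auto
  have "core_deg G (last xs) \<noteq> 2"
  proof
    assume cd: "core_deg G (last xs) = 2"
    then have "core_nbrs G (last xs) \<subseteq> {xs ! (length xs - 2)}"
      using stop[OF cd] by (auto simp: core_nbrs_def)
    then have "core_deg G (last xs) \<le> 1"
      using card_mono[of "{xs ! (length xs - 2)}"] by (simp add: core_deg_def)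
    then show False using cd by simp
  qed
  moreover have "is_source G (last xs)"
    using core_not_source(2)[OF t c leaves core_last] calculation by blast
  moreover have "core_deg G (rev xs ! i) = 2" if i: "1 \<le> i" "i < length xs" for i
  proof (cases "i = length xs - 1")
    case False
    then have "1 \<le> length xs - Suc i" "Suc (length xs - Suc i) < length xs" using i by auto
    then show ?thesis using inner i by (simp add: rev_nth)
  qed (use v(2) x0 i in \<open>simp add: rev_nth\<close>)
  moreover have "rev xs ! 0 = last xs" "last (rev xs) = v" "\<forall>x\<in>set (rev xs). core G x"
    using ne x0 core by (auto simp: rev_nth last_conv_nth last_rev hd_conv_nth)
  ultimately have "core_chain G v (rev xs)"
    using is_path_rev[OF p] lx unfolding core_chain_def by simp
  then show ?thesis ..
qed

lemma core_chain_length_le: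
  assumes g: "is_graph G" and ch: "core_chain G v ch" and d: "C_number G 1 \<le> d"
  shows "length ch - 1 \<le> C_number G d"
  using le_C_number[OF g core_path_is_C_gadget[OF g _ _ _ d]] ch unfolding core_chain_def by simp

lemma core_chain_determined:
  assumes ch: "core_chain G v ch" "core_chain G v' ch'"
    and start: "ch ! 0 = ch' ! 0" "ch ! 1 = ch' ! 1" and len: "length ch = length ch'"
  shows "v = v'"
proof -
  have p: "is_path G ch" "is_path G ch'" and core: "\<forall>x\<in>set ch. core G x" "\<forall>x\<in>set ch'. core G x"
    and n: "2 \<le> length ch" and inner: "\<forall>i. 1 \<le> i \<and> i < length ch \<longrightarrow> core_deg G (ch ! i) = 2"
    using ch unfolding core_chain_def by auto
  have "ch ! (length ch - 1) = ch' ! (length ch - 1)"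
  proof (rule walk_determined_by_first_edge[where N = "core_nbrs G", OF _ _ start])
    show "distinct ch" "distinct ch'" using p by (simp_all add: is_path_def)
  qed (use core_path_nbrs[OF p(1) core(1)] core_path_nbrs[OF p(2) core(2)] inner len n
      in \<open>auto simp: core_deg_def\<close>)
  moreover have "ch \<noteq> []" "ch' \<noteq> []" using n len by auto
  ultimately have "last ch = last ch'" using len by (simp add: last_conv_nth)
  then show ?thesis using ch unfolding core_chain_def by simp
qed

text \<open>Each vertex is mapped to the first edge and the length of a core chain ending in it; the map
  is injective, and the length is bounded because the chain is a C-gadget.\<close>
lemma card_core_deg_2_le:
  assumes t: "is_tree G" and c: "2 \<le> card (verts G)"
    and leaves: "\<forall>v\<in>verts G. deg G v = 1 \<longrightarrow> \<not> core G v" and d: "C_number G 1 \<le> d"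
  shows "card {v. core G v \<and> core_deg G v = 2}
    \<le> (\<Sum>s\<in>{s \<in> sources G. core_deg G s \<noteq> 2}. core_deg G s) * Suc (C_number G d)"
proof -
  have g: "is_graph G" using t by (rule tree_is_graph)
  define A where "A = {s \<in> sources G. core_deg G s \<noteq> 2}"
  define C2 where "C2 = {v. core G v \<and> core_deg G v = 2}"
  define chain where "chain v = (SOME ch. core_chain G v ch)" for v
  have chain: "core_chain G v (chain v)" if "v \<in> C2" for v
    using core_chain_exists[OF t c leaves] that unfolding C2_def chain_def by (auto intro: someI_ex)
  define f where "f v = ((chain v ! 0, chain v ! 1), length (chain v) - 1)" for v
  have "f ` C2 \<subseteq> Sigma A (core_nbrs G) \<times> {..C_number G d}"
  proof (intro subsetI, elim imageE)
    fix y v assume v: "v \<in> C2" and y: "y = f v"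
    then have ch: "core_chain G v (chain v)" by (simp add: chain)
    then have "chain v ! 1 \<in> core_nbrs G (chain v ! 0)"
      using core_path_nbrs(2)[of G "chain v" 0] unfolding core_chain_def by simp
    then show "y \<in> Sigma A (core_nbrs G) \<times> {..C_number G d}"
      using ch y core_chain_length_le[OF g ch d] unfolding f_def core_chain_def A_def sources_def by simp
  qed
  moreover have "inj_on f C2"
  proof (rule inj_onI)
    fix v v' assume v: "v \<in> C2" "v' \<in> C2" and "f v = f v'"
    moreover have "2 \<le> length (chain v)" "2 \<le> length (chain v')"
      using chain[OF v(1)] chain[OF v(2)] unfolding core_chain_def by auto
    ultimately show "v = v'"
      using core_chain_determined[OF chain[OF v(1)] chain[OF v(2)]] unfolding f_def by auto
  qed
  moreover have "finite (Sigma A (core_nbrs G) \<times> {..C_number G d})"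
    using finite_sources[OF g] finite_core_nbrs[OF g] unfolding A_def by auto
  ultimately have "card C2 \<le> card (Sigma A (core_nbrs G) \<times> {..C_number G d})"
    by (metis card_image card_mono)
  also have "\<dots> = (\<Sum>s\<in>A. core_deg G s) * Suc (C_number G d)"
    using finite_sources[OF g] finite_core_nbrs[OF g] unfolding A_def core_deg_def
    by (simp add: card_cartesian_product)
  finally show ?thesis unfolding A_def C2_def .
qed

lemma card_core_le:
  assumes t: "is_tree G" and c: "2 \<le> card (verts G)"
    and leaves: "\<forall>v\<in>verts G. deg G v = 1 \<longrightarrow> \<not> core G v" and d: "C_number G 1 \<le> d"
  shows "card (Collect (core G)) \<le> card {s \<in> sources G. core_deg G s \<noteq> 2} * (1 + 2 * Suc (C_number G d))"
proof -
  have g: "is_graph G" using t by (rule tree_is_graph)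
  let ?A = "{s \<in> sources G. core_deg G s \<noteq> 2}" and ?C2 = "{v. core G v \<and> core_deg G v = 2}"
  have "v \<in> ?A \<union> ?C2" if "core G v" for v
    using that core_not_source(2)[OF t c leaves, of v] by (cases "is_source G v") (auto simp: sources_def)
  moreover have "finite (?A \<union> ?C2)"
    using finite_sources[OF g] finite_core[OF g] by auto
  ultimately have "card (Collect (core G)) \<le> card (?A \<union> ?C2)"
    by (intro card_mono) auto
  also have "\<dots> \<le> card ?A + card ?C2" by (rule card_Un_le)
  also have "card ?C2 \<le> 2 * card ?A * Suc (C_number G d)"
    using card_core_deg_2_le[OF t c leaves d] card_core_deg_ne_2_sources(2)[OF t c leaves]
    by (meson le_trans mult_le_mono1)
  finally show ?thesis by (simp add: algebra_simps)
qed

section \<open>Splitting off a matching\<close>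

text \<open>Deleting the core and all rays of length at least 3 leaves only rays of length 1 and 2 minus
  their sources, in which every vertex has at most one neighbour.\<close>
definition split_set :: "'a graph \<Rightarrow> 'a set" where
  "split_set G = Collect (core G) \<union> {v. \<exists>a s r. 3 \<le> a \<and> ray G a s r \<and> v \<in> set r}"

lemma split_set_subset_verts: "split_set G \<subseteq> verts G"
  unfolding split_set_def using core_subset_verts ray_set_subset by fastforce

lemma split_set_rest_deg_le_1:
  assumes g: "is_graph G" and v: "v \<in> verts G - split_set G"
  shows "card {u \<in> verts G - split_set G. {u, v} \<in> edges G} \<le> 1"
proof -
  let ?U = "{u \<in> verts G - split_set G. {u, v} \<in> edges G}"
  have "\<not> core G v" using v by (simp add: split_set_def)
  then obtain a s r j where r: "ray G a s r" "1 \<le> j" "j \<le> a" "r ! j = v"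
    using v unfolding core_def by blast
  have "a \<le> 2"
  proof (rule ccontr)
    assume "\<not> a \<le> 2"
    moreover have "v \<in> set r" using r(3,4) nth_mem[of j r] ray_length[OF r(1)] by simp
    ultimately have "v \<in> split_set G"
      using r(1) unfolding split_set_def by (auto intro!: exI[of _ a] exI[of _ s] exI[of _ r])
    then show False using v by simp
  qed
  have sub: "?U \<subseteq> nbrs G v" by (auto simp: nbrs_def)
  show ?thesis
  proof (cases "j = a")
    case True
    then have "card (nbrs G v) = 1" using ray_end_deg[OF r(1)] r(4) by (simp add: deg_eq_card_nbrs)
    then show ?thesis using card_mono[OF finite_nbrs[OF g] sub] by simp
  next
    case False
    then have j: "j = 1" "a = 2" using r(2,3) \<open>a \<le> 2\<close> by auto
    have "r ! 0 \<in> split_set G"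
      using source_is_core[OF ray_source[OF r(1)]] ray_first[OF r(1)] by (simp add: split_set_def)
    then have "?U \<subseteq> {r ! 2}"
      using ray_nbrs[OF r(1-3)] r(4) j by (auto simp: nbrs_def numeral_2_eq_2)
    then show ?thesis using card_mono[of "{r ! 2}"] by fastforce
  qed
qed

lemma card_vertices_long_rays_le:
  assumes g: "is_graph G" and stars: "\<forall>c. 3 \<le> c \<longrightarrow> star_number G c < BS"
  shows "card (\<Union>a\<in>{3..C_number G 1}. \<Union>r\<in>{r. ray G a s r}. set r)
    \<le> C_number G 1 * (BS * Suc (C_number G 1))"
proof -
  let ?C = "C_number G 1"
  have "card (\<Union>a\<in>{3..?C}. \<Union>r\<in>{r. ray G a s r}. set r) \<le> card {3..?C} * (BS * Suc ?C)"
  proof (intro card_UN_le_mult)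
    fix a assume a: "a \<in> {3..?C}"
    have "card {r. ray G a s r} \<le> BS"
      using degL_len_le_star_number[OF g, of a s] stars[rule_format, of a] a
      by (simp add: degL_len_def)
    moreover have "card (set r) \<le> Suc ?C" if "r \<in> {r. ray G a s r}" for r
    proof -
      have "ray G a s r" using that by simp
      then show ?thesis using card_set_path[OF ray_is_path] ray_length a by fastforce
    qed
    ultimately show "card (\<Union>r\<in>{r. ray G a s r}. set r) \<le> BS * Suc ?C"
      using card_UN_le_mult[OF finite_rays_of_length[OF g], of a s "\<lambda>r. set r" "Suc ?C"]
      by (meson le_trans mult_le_mono1)
  qed simp
  moreover have "card {3..?C} * (BS * Suc ?C) \<le> ?C * (BS * Suc ?C)"
    by (intro mult_le_mono1) simp
  ultimately show ?thesis by (rule le_trans)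
qed

lemma card_split_set_le:
  assumes g: "is_graph G" and stars: "\<forall>c. 3 \<le> c \<longrightarrow> star_number G c < BS"
  shows "card (split_set G)
    \<le> card (Collect (core G)) * (1 + C_number G 1 * (BS * Suc (C_number G 1)))"
proof -
  let ?C = "C_number G 1"
  let ?L = "{v. \<exists>a s r. 3 \<le> a \<and> ray G a s r \<and> v \<in> set r}"
  let ?R = "\<Union>s\<in>sources G. \<Union>a\<in>{3..?C}. \<Union>r\<in>{r. ray G a s r}. set r"
  have "?L \<subseteq> ?R"
  proof
    fix v assume "v \<in> ?L"
    then obtain a s r where r: "3 \<le> a" "ray G a s r" "v \<in> set r" by blast
    then have "s \<in> sources G" "a \<in> {3..?C}"
      using ray_length_le_C_number[OF g r(2)] ray_source[OF r(2)] unfolding sources_def by auto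
    then show "v \<in> ?R" using r by blast
  qed
  moreover have "finite ?R"
    using finite_sources[OF g] finite_rays_of_length[OF g] by auto
  ultimately have "card ?L \<le> card ?R" by (rule card_mono[rotated])
  also have "\<dots> \<le> card (sources G) * (?C * (BS * Suc ?C))"
    by (intro card_UN_le_mult finite_sources[OF g] card_vertices_long_rays_le[OF g stars])
  also have "card (sources G) \<le> card (Collect (core G))"
    using finite_core[OF g] source_is_core[of G] by (intro card_mono) (auto simp: sources_def)
  finally have "card ?L \<le> card (Collect (core G)) * (?C * (BS * Suc ?C))"
    by (simp add: mult_le_mono1)
  then show ?thesis
    using card_Un_le[of "Collect (core G)" ?L] unfolding split_set_def by (simp add: algebra_simps)
qed

lemma matching_split_number_le_card_core:
  assumes g: "is_graph G" and stars: "\<forall>c. 3 \<le> c \<longrightarrow> star_number G c < BS"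
  shows "matching_split_number G
    \<le> card (Collect (core G)) * (1 + C_number G 1 * (BS * Suc (C_number G 1)))"
  using matching_split_number_le[OF g split_set_subset_verts] split_set_rest_deg_le_1[OF g]
    card_split_set_le[OF g stars] by (meson le_trans)

lemma matching_split_number_le_bound:
  assumes t: "is_tree G" and forks: "\<forall>a b. 0 < a \<longrightarrow> 0 < b \<longrightarrow> fork_number G a b < BF"
    and stars: "\<forall>c. 3 \<le> c \<longrightarrow> star_number G c < BS"
    and C1: "C_number G 1 \<le> d" and Cd: "C_number G d \<le> D"
  shows "matching_split_number G \<le> (1 + 4 * d * d * BF) * (1 + 2 * Suc D) * (1 + d * (BS * Suc d)) + Suc d"
proof (cases "2 \<le> card (verts G) \<and> (\<forall>v\<in>verts G. deg G v = 1 \<longrightarrow> \<not> core G v)")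
  case True
  then have c: "2 \<le> card (verts G)" and leaves: "\<forall>v\<in>verts G. deg G v = 1 \<longrightarrow> \<not> core G v" by auto
  have "4 * C_number G 1 * C_number G 1 * BF \<le> 4 * d * d * BF"
    using C1 by (intro mult_le_mono) auto
  then have A: "card {s \<in> sources G. core_deg G s \<noteq> 2} \<le> 1 + 4 * d * d * BF"
    using card_core_deg_ne_2_sources_le[OF t c leaves forks] by linarith
  have "1 + 2 * Suc (C_number G d) \<le> 1 + 2 * Suc D" using Cd by simp
  from le_trans[OF card_core_le[OF t c leaves C1] mult_le_mono[OF A this]]
  have core: "card (Collect (core G)) \<le> (1 + 4 * d * d * BF) * (1 + 2 * Suc D)" .
  have "1 + C_number G 1 * (BS * Suc (C_number G 1)) \<le> 1 + d * (BS * Suc d)"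
    using C1 by (intro add_le_mono order_refl mult_le_mono) auto
  from le_trans[OF matching_split_number_le_card_core[OF tree_is_graph[OF t] stars] mult_le_mono[OF core this]]
  show ?thesis by simp
next
  case False
  then have "card (verts G) \<le> Suc (C_number G 1)"
    using card_verts_le_if_core_leaf[OF t] by fastforce
  then show ?thesis
    using matching_split_number_le_card_verts[OF tree_is_graph[OF t]] C1 by linarith
qed

lemma matching_splittable_if_bounded:
  assumes "\<forall>T\<in>\<T>. is_tree T" "\<forall>T\<in>\<T>. \<forall>a b. 0 < a \<longrightarrow> 0 < b \<longrightarrow> fork_number T a b < BF"
    "\<forall>T\<in>\<T>. \<forall>c. 3 \<le> c \<longrightarrow> star_number T c < BS"
    "\<forall>T\<in>\<T>. C_number T 1 \<le> d" "\<forall>T\<in>\<T>. C_number T d \<le> D"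
  shows "matching_splittable \<T>"
proof -
  have "matching_split_number T \<le> (1 + 4 * d * d * BF) * (1 + 2 * Suc D) * (1 + d * (BS * Suc d)) + Suc d"
    if "T \<in> \<T>" for T
    using that assms by (intro matching_split_number_le_bound) simp_all
  then show ?thesis unfolding matching_splittable_def by blast
qed

theorem lemma32:
  fixes \<T> :: "'a graph set"
  assumes "\<forall>T\<in>\<T>. is_tree T"
    and "\<not> matching_splittable \<T>"
  shows "unbounded_fork_number \<T> \<or> unbounded_star_number \<T> \<or> unbounded_C_number \<T>"
proof (rule ccontr)
  assume "\<not> (unbounded_fork_number \<T> \<or> unbounded_star_number \<T> \<or> unbounded_C_number \<T>)"
  then have nF: "\<not> unbounded_fork_number \<T>" and nS: "\<not> unbounded_star_number \<T>"
    and nC: "\<not> unbounded_C_number \<T>"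
    by simp_all
  from nF obtain BF where forks: "\<forall>T\<in>\<T>. \<forall>a b. 0 < a \<longrightarrow> 0 < b \<longrightarrow> fork_number T a b < BF"
    unfolding unbounded_fork_number_def by (meson not_le)
  from nS obtain BS where stars: "\<forall>T\<in>\<T>. \<forall>c. 3 \<le> c \<longrightarrow> star_number T c < BS"
    unfolding unbounded_star_number_def by (meson not_le)
  from nC have C: "\<forall>d>0. \<exists>B. \<forall>T\<in>\<T>. C_number T d < B"
    unfolding unbounded_C_number_def by (meson not_le)
  then obtain d where d: "\<forall>T\<in>\<T>. C_number T 1 < d" by auto
  then have "0 < d" using assms(2) unfolding matching_splittable_def by fastforce
  then obtain D where D: "\<forall>T\<in>\<T>. C_number T d < D" using C by auto
  have "matching_splittable \<T>"
    using d D by (intro matching_splittable_if_bounded[OF assms(1) forks stars, where d = d and D = D])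
      (simp_all add: less_imp_le)
  with assms(2) show False by contradiction
qed

end
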